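(* There is an absolute constant $c>0$ such that the following holds. Let $d\ge1$, $r\le 1/2$, $\eta\in(0,1/2)$, $\delta\in(0,1)$, let $\phi=\min(\eta,\tfrac12-\eta)$, and suppose $$N\ge \frac{16}{(cr)^d\phi^2}\left(\ln\frac{8}{(cr)^d\phi^2}+\ln\frac1\delta\right).$$ Then with probability at least $1-\delta$ there exists an ordering (permutation) $\pi$ of the sensors such that asynchronous best-response updates in the order $\pi$ cause all sensors to end in the same state (regardless of how ties are broken).
   Context: Sensors $1,\dots,N$ have positions $x_1,\dots,x_N$ drawn i.i.d. uniformly from the unit ball $\{x\in\mathbb{R}^d:\|x\|\le 1\}$. The target separator is the hyperplane $\{x: w\cdot x=0\}$ for a fixed unit vector $w$, and the target label of $x$ is $t(x)=\mathrm{sign}(w\cdot x)$. Here the noise rate is exactly $\eta$: conditional on the positions, the initial states in $\{+1,-1\}$ are independent, and sensor $i$'s initial state equals $t(x_i)$ with probability $1-\eta$ and equals $-t(x_i)$ with probability $\eta$. Distinct sensors $i\ne j$ are neighbors if $\|x_i-x_j\|\le r$. A best-response update of sensor $i$ sets its state to the majority state among its neighbors' current states (ties broken arbitrarily). Asynchronous updates in order $\pi$: sensors $\pi(1),\pi(2),\dots,\pi(N)$ each perform one best-response update, one at a time, each using the states current at the time of its update. *)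

theory Defs
  imports "HOL-Probability.Probability"
begin

text \<open>Points of R^d are represented as functions nat => real, with coordinates 0..d-1.\<close>

definition unit_ball_d :: "nat \<Rightarrow> (nat \<Rightarrow> real) set" where
  "unit_ball_d d = {x \<in> PiE {..<d} (\<lambda>_. UNIV). (\<Sum>i<d. (x i)^2) \<le> 1}"

definition dist_d :: "nat \<Rightarrow> (nat \<Rightarrow> real) \<Rightarrow> (nat \<Rightarrow> real) \<Rightarrow> real" where
  "dist_d d x y = sqrt (\<Sum>i<d. (x i - y i)^2)"

definition uniform_ball :: "nat \<Rightarrow> (nat \<Rightarrow> real) measure" where
  "uniform_ball d = uniform_measure (PiM {..<d} (\<lambda>_. lborel)) (unit_ball_d d)"

text \<open>Sensor model: for each sensor i < N, a position (uniform on the ball) and an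
  independent flag that is True with probability eta (the initial state is flipped).\<close>
definition sensor_model :: "nat \<Rightarrow> nat \<Rightarrow> real \<Rightarrow> (nat \<Rightarrow> (nat \<Rightarrow> real) \<times> bool) measure" where
  "sensor_model d N \<eta> = PiM {..<N} (\<lambda>_. uniform_ball d \<Otimes>\<^sub>M measure_pmf (bernoulli_pmf \<eta>))"

text \<open>Target label sign(w . x); the measure-zero boundary case w . x = 0 is labelled +1.\<close>
definition target :: "nat \<Rightarrow> (nat \<Rightarrow> real) \<Rightarrow> (nat \<Rightarrow> real) \<Rightarrow> int" where
  "target d w x = (if (\<Sum>i<d. w i * x i) \<ge> 0 then 1 else -1)"

definition init_state :: "nat \<Rightarrow> (nat \<Rightarrow> real) \<Rightarrow> (nat \<Rightarrow> (nat \<Rightarrow> real) \<times> bool) \<Rightarrow> nat \<Rightarrow> int" where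
  "init_state d w \<omega> i = (if snd (\<omega> i) then - target d w (fst (\<omega> i)) else target d w (fst (\<omega> i)))"

definition neighbors :: "nat \<Rightarrow> nat \<Rightarrow> real \<Rightarrow> (nat \<Rightarrow> nat \<Rightarrow> real) \<Rightarrow> nat \<Rightarrow> nat set" where
  "neighbors d N r x j = {i \<in> {..<N}. i \<noteq> j \<and> dist_d d (x i) (x j) \<le> r}"

text \<open>Best response of sensor j: majority state among neighbours; the tie value b
  (in {-1,1}) is used when there is a tie (including no neighbours).\<close>
definition br_update :: "nat \<Rightarrow> nat \<Rightarrow> real \<Rightarrow> (nat \<Rightarrow> nat \<Rightarrow> real) \<Rightarrow> (nat \<Rightarrow> int) \<Rightarrow> nat \<Rightarrow> int \<Rightarrow> (nat \<Rightarrow> int)" where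
  "br_update d N r x s j b =
     (let S = (\<Sum>i\<in>neighbors d N r x j. s i)
      in s(j := (if S > 0 then 1 else if S < 0 then -1 else b)))"

primrec async_run :: "nat \<Rightarrow> nat \<Rightarrow> real \<Rightarrow> (nat \<Rightarrow> nat \<Rightarrow> real) \<Rightarrow> (nat \<Rightarrow> nat) \<Rightarrow> (nat \<Rightarrow> int) \<Rightarrow> (nat \<Rightarrow> int) \<Rightarrow> nat \<Rightarrow> (nat \<Rightarrow> int)" where
  "async_run d N r x \<pi> b s0 0 = s0"
| "async_run d N r x \<pi> b s0 (Suc k) = br_update d N r x (async_run d N r x \<pi> b s0 k) (\<pi> k) (b k)"

definition consensus_event :: "nat \<Rightarrow> nat \<Rightarrow> real \<Rightarrow> (nat \<Rightarrow> real) \<Rightarrow> (nat \<Rightarrow> (nat \<Rightarrow> real) \<times> bool) \<Rightarrow> bool" where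
  "consensus_event d N r w \<omega> =
     (\<exists>\<pi>. bij_betw \<pi> {..<N} {..<N} \<and>
        (\<forall>b. (\<forall>k. b k \<in> {-1, 1}) \<longrightarrow>
           (\<exists>v. \<forall>i<N. async_run d N r (\<lambda>i. fst (\<omega> i)) \<pi> b (init_state d w \<omega>) N i = v)))"

end

theory Submission
  imports Defs
begin

text \<open>Order the sensors by increasing altitude \<open>w \<bullet> x\<close> and let them update in this order.
  When sensor \<open>j\<close> updates, all its lower neighbours already hold \<open>-1\<close>, so it switches to \<open>-1\<close>
  as soon as a sum of \<open>N - 1\<close> votes (\<open>+1\<close> for a lower neighbour, minus the initial state for a
  higher one, 0 for non-neighbours) is positive; then all sensors end in \<open>-1\<close> whatever the tie-breaking.
  Given \<open>x\<^sub>j\<close> the votes are i.i.d., so a Chernoff bound with parameter \<open>\<phi> / 16^d\<close> bounds the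
  probability of a non-positive sum by \<open>(1 - \<phi>\<^sup>2 (r/256)^d)^(N-1)\<close>. The exponential moment is
  controlled by the drift of a single vote: a ball of radius \<open>r/16\<close> fits into the lower part of
  the neighbourhood, and a reflection in a hyperplane parallel to the separator shows that the
  upper part carrying label \<open>+1\<close> is no larger than the rest. A union bound over \<open>j\<close> and the
  sample-size condition with \<open>c = 1/256\<close> conclude.\<close>

section \<open>Volume-scaling maps\<close>

abbreviation lborel_d :: "nat \<Rightarrow> (nat \<Rightarrow> real) measure" where
  "lborel_d d \<equiv> PiM {..<d} (\<lambda>_. lborel)"

lemma space_lborel_d: "space (lborel_d d) = PiE {..<d} (\<lambda>_. UNIV)"
  by (simp add: space_PiM)

definition scales_volume :: "nat \<Rightarrow> ennreal \<Rightarrow> ((nat \<Rightarrow> real) \<Rightarrow> (nat \<Rightarrow> real)) \<Rightarrow> bool" where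
  "scales_volume d c T \<longleftrightarrow> T \<in> lborel_d d \<rightarrow>\<^sub>M lborel_d d \<and>
     (\<forall>S\<in>sets (lborel_d d). emeasure (lborel_d d) (T -` S \<inter> space (lborel_d d)) = c * emeasure (lborel_d d) S)"

lemma scales_volume_comp:
  assumes "scales_volume d c1 T1" "scales_volume d c2 T2"
  shows "scales_volume d (c1 * c2) (T2 \<circ> T1)"
proof -
  have m1: "T1 \<in> lborel_d d \<rightarrow>\<^sub>M lborel_d d" and m2: "T2 \<in> lborel_d d \<rightarrow>\<^sub>M lborel_d d"
    using assms by (auto simp: scales_volume_def)
  have "emeasure (lborel_d d) ((T2 \<circ> T1) -` S \<inter> space (lborel_d d)) = c1 * c2 * emeasure (lborel_d d) S"
    if S: "S \<in> sets (lborel_d d)" for S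
  proof -
    have "(T2 \<circ> T1) -` S \<inter> space (lborel_d d) = T1 -` (T2 -` S \<inter> space (lborel_d d)) \<inter> space (lborel_d d)"
      using measurable_space[OF m1] by auto
    moreover have "T2 -` S \<inter> space (lborel_d d) \<in> sets (lborel_d d)"
      using m2 S by (rule measurable_sets)
    ultimately have "emeasure (lborel_d d) ((T2 \<circ> T1) -` S \<inter> space (lborel_d d))
        = c1 * emeasure (lborel_d d) (T2 -` S \<inter> space (lborel_d d))"
      using assms(1) by (simp only: scales_volume_def)
    then show ?thesis using assms(2) S by (simp add: scales_volume_def mult.assoc)
  qed
  then show ?thesis using measurable_comp[OF m1 m2] by (simp add: scales_volume_def)
qed

lemma scales_volume_cong:
  assumes "scales_volume d c T" "\<And>y. y \<in> space (lborel_d d) \<Longrightarrow> T y = T' y"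
  shows "scales_volume d c T'"
proof -
  have "T' \<in> lborel_d d \<rightarrow>\<^sub>M lborel_d d"
    using assms by (auto simp: scales_volume_def intro: measurable_cong[THEN iffD1])
  moreover have "T' -` S \<inter> space (lborel_d d) = T -` S \<inter> space (lborel_d d)" for S
    using assms(2) by auto
  ultimately show ?thesis using assms(1) by (auto simp: scales_volume_def)
qed

lemma nn_integral_lborel_affine:
  fixes g :: "real \<Rightarrow> ennreal" and a b :: real
  assumes g: "g \<in> borel_measurable borel" and a: "a \<noteq> 0"
  shows "(\<integral>\<^sup>+ v. g (b + a * v) \<partial>lborel) = ennreal (1 / \<bar>a\<bar>) * (\<integral>\<^sup>+ v. g v \<partial>lborel)"
proof -
  have "ennreal (1 / \<bar>a\<bar>) * (\<integral>\<^sup>+ v. g v \<partial>lborel)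
      = ennreal (1 / \<bar>a\<bar>) * ennreal \<bar>a\<bar> * (\<integral>\<^sup>+ v. g (b + a * v) \<partial>lborel)"
    using nn_integral_real_affine[OF g a, of b] by (simp add: mult.assoc)
  also have "ennreal (1 / \<bar>a\<bar>) * ennreal \<bar>a\<bar> = 1"
    using a by (simp flip: ennreal_mult)
  finally show ?thesis by simp
qed

lemma shear_measurable:
  assumes "i < d" "f \<in> borel_measurable (lborel_d d)"
  shows "(\<lambda>y. y(i := a * y i + f y)) \<in> lborel_d d \<rightarrow>\<^sub>M lborel_d d"
proof (rule measurable_PiM_single')
  show "(\<lambda>y. (y(i := a * y i + f y)) k) \<in> lborel_d d \<rightarrow>\<^sub>M lborel" if "k \<in> {..<d}" for k
    using that assms by (cases "k = i") simp_all
  show "(\<lambda>y. y(i := a * y i + f y)) \<in> space (lborel_d d) \<rightarrow> (\<Pi>\<^sub>E i\<in>{..<d}. space lborel)"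
    using assms(1) by (auto simp: space_PiM PiE_def extensional_def)
qed

text \<open>Fubini with coordinate \<open>i\<close> innermost reduces a shear to a one-dimensional affine
  substitution on every fibre.\<close>

lemma scales_volume_shear:
  fixes a :: real and f :: "(nat \<Rightarrow> real) \<Rightarrow> real"
  assumes i: "i < d" and a: "a \<noteq> 0"
    and f_meas: "f \<in> borel_measurable (lborel_d d)"
    and f_indep: "\<And>y v. f (y(i := v)) = f y"
  shows "scales_volume d (ennreal (1 / \<bar>a\<bar>)) (\<lambda>y. y(i := a * y i + f y))"
proof -
  interpret product_sigma_finite "\<lambda>_::nat. lborel :: real measure" by standard
  define I' where "I' = {..<d} - {i}"
  have I: "{..<d} = insert i I'" "finite I'" "i \<notin> I'" using i by (auto simp: I'_def)
  let ?T = "\<lambda>y::nat\<Rightarrow>real. y(i := a * y i + f y)"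
  let ?M = "lborel_d d" and ?M' = "PiM I' (\<lambda>_. lborel :: real measure)"
  have T_meas: "?T \<in> ?M \<rightarrow>\<^sub>M ?M" by (rule shear_measurable[OF i f_meas])
  have "emeasure ?M (?T -` S \<inter> space ?M) = ennreal (1 / \<bar>a\<bar>) * emeasure ?M S"
    if S: "S \<in> sets ?M" for S
  proof -
    have S_ind: "indicator S \<in> borel_measurable ?M" using S by simp
    have pre: "?T -` S \<inter> space ?M \<in> sets ?M" using T_meas S by (rule measurable_sets)
    have "(\<lambda>(x, v). x(i := v)) \<in> ?M' \<Otimes>\<^sub>M lborel \<rightarrow>\<^sub>M ?M"
      unfolding I(1) by (rule measurable_add_dim)
    from measurable_comp[OF this S_ind]
    have fiber_meas: "(\<lambda>x. \<integral>\<^sup>+ v. indicator S (x(i := v)) \<partial>lborel) \<in> borel_measurable ?M'"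
      by (intro lborel.borel_measurable_nn_integral) (simp add: comp_def split_beta')
    have fiber: "(\<integral>\<^sup>+ v. indicator (?T -` S \<inter> space ?M) (x(i := v)) \<partial>lborel)
        = ennreal (1 / \<bar>a\<bar>) * (\<integral>\<^sup>+ v. indicator S (x(i := v)) \<partial>lborel)"
      if x: "x \<in> space ?M'" for x
    proof -
      have "(\<lambda>v. x(i := v)) \<in> lborel \<rightarrow>\<^sub>M ?M"
        using measurable_component_update[OF x I(3)] I(1) by simp
      from measurable_comp[OF this S_ind]
      have "(\<lambda>v. indicator S (x(i := v)) :: ennreal) \<in> borel_measurable borel"
        by (simp add: comp_def)
      moreover have "x(i := v) \<in> space ?M" for v
        using x I by (auto simp: space_PiM PiE_def extensional_def)
      then have "indicator (?T -` S \<inter> space ?M) (x(i := v)) = (indicator S (x(i := f x + a * v)) :: ennreal)" for v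
        using f_indep[of x v] by (simp add: indicator_def mult.commute add.commute)
      ultimately show ?thesis
        using nn_integral_lborel_affine[of "\<lambda>v. indicator S (x(i := v))" a "f x"] a by simp
    qed
    have "emeasure ?M (?T -` S \<inter> space ?M) = (\<integral>\<^sup>+ y. indicator (?T -` S \<inter> space ?M) y \<partial>?M)"
      using pre by simp
    also have "\<dots> = (\<integral>\<^sup>+ x. (\<integral>\<^sup>+ v. indicator (?T -` S \<inter> space ?M) (x(i := v)) \<partial>lborel) \<partial>?M')"
      unfolding I(1) by (rule product_nn_integral_insert) (use I pre[unfolded I(1)] in auto)
    also have "\<dots> = ennreal (1 / \<bar>a\<bar>) * (\<integral>\<^sup>+ x. (\<integral>\<^sup>+ v. indicator S (x(i := v)) \<partial>lborel) \<partial>?M')"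
      by (simp add: fiber nn_integral_cmult[OF fiber_meas] cong: nn_integral_cong)
    also have "(\<integral>\<^sup>+ x. (\<integral>\<^sup>+ v. indicator S (x(i := v)) \<partial>lborel) \<partial>?M') = emeasure ?M S"
      unfolding I(1) using S by (subst product_nn_integral_insert[symmetric]) (use I S_ind[unfolded I(1)] in auto)
    finally show ?thesis .
  qed
  then show ?thesis using T_meas by (auto simp: scales_volume_def)
qed

definition ignores_coords :: "nat set \<Rightarrow> ((nat \<Rightarrow> real) \<Rightarrow> real) \<Rightarrow> bool" where
  "ignores_coords J g \<longleftrightarrow> (\<forall>y y'. (\<forall>m. m \<notin> J \<longrightarrow> y m = y' m) \<longrightarrow> g y = g y')"

lemma scales_volume_parallel_shear:
  assumes "finite J" "J \<subseteq> {..<d}"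
    and "\<And>k. k \<in> J \<Longrightarrow> a k \<noteq> 0"
    and "\<And>k. k \<in> J \<Longrightarrow> g k \<in> borel_measurable (lborel_d d)"
    and "\<And>k. k \<in> J \<Longrightarrow> ignores_coords J (g k)"
  shows "scales_volume d (\<Prod>k\<in>J. ennreal (1 / \<bar>a k\<bar>)) (\<lambda>y k. if k \<in> J then a k * y k + g k y else y k)"
  using assms
proof (induction J rule: finite_induct)
  case empty
  show ?case by (simp add: scales_volume_def)
next
  case (insert j J)
  let ?S = "\<lambda>y k. if k \<in> J then a k * y k + g k y else y k"
  have "scales_volume d (\<Prod>k\<in>J. ennreal (1 / \<bar>a k\<bar>)) ?S"
    using insert.prems by (intro insert.IH) (auto simp: ignores_coords_def)
  moreover have "scales_volume d (ennreal (1 / \<bar>a j\<bar>)) (\<lambda>y. y(j := a j * y j + g j y))"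
    using insert.prems by (intro scales_volume_shear) (auto simp: ignores_coords_def)
  ultimately have "scales_volume d (\<Prod>k\<in>insert j J. ennreal (1 / \<bar>a k\<bar>)) ((\<lambda>y. y(j := a j * y j + g j y)) \<circ> ?S)"
    using insert.hyps scales_volume_comp by (fastforce simp: mult.commute)
  moreover have "g j (?S y) = g j y" for y
    using insert.prems(4)[of j] insert.hyps by (auto simp: ignores_coords_def)
  ultimately show ?case
    by (elim scales_volume_cong) (use insert.hyps in \<open>auto simp: fun_eq_iff\<close>)
qed

lemma scales_volume_translation:
  "scales_volume d 1 (\<lambda>y k. if k < d then y k + v k else y k)"
proof -
  have "scales_volume d (\<Prod>k<d. ennreal (1 / \<bar>1\<bar>)) (\<lambda>y k. if k \<in> {..<d} then 1 * y k + v k else y k)"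
    by (rule scales_volume_parallel_shear) (auto simp: ignores_coords_def)
  then have "scales_volume d 1 (\<lambda>y k. if k \<in> {..<d} then 1 * y k + v k else y k)"
    by simp
  then show ?thesis by (rule scales_volume_cong) auto
qed

section \<open>Altitude and hyperplane reflections\<close>

definition altitude :: "nat \<Rightarrow> (nat \<Rightarrow> real) \<Rightarrow> (nat \<Rightarrow> real) \<Rightarrow> real" where
  "altitude d w y = (\<Sum>k<d. w k * y k)"

definition hyperplane_reflection :: "nat \<Rightarrow> (nat \<Rightarrow> real) \<Rightarrow> real \<Rightarrow> (nat \<Rightarrow> real) \<Rightarrow> (nat \<Rightarrow> real)" where
  "hyperplane_reflection d w a y = (\<lambda>k. if k < d then y k - 2 * (altitude d w y - a) * w k else y k)"

lemma measurable_lborel_d_component: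
  assumes "f \<in> M \<rightarrow>\<^sub>M lborel_d d" "k < d"
  shows "(\<lambda>z. f z k) \<in> borel_measurable M"
  using measurable_comp[OF assms(1) measurable_component_singleton, of k] assms(2) by (simp add: comp_def)

lemma altitude_measurable[measurable]:
  assumes "f \<in> M \<rightarrow>\<^sub>M lborel_d d"
  shows "(\<lambda>z. altitude d w (f z)) \<in> borel_measurable M"
  unfolding altitude_def by measurable (auto intro: measurable_lborel_d_component[OF assms])

lemma unit_vector_has_nonzero_coord:
  assumes "(\<Sum>k<d. (w k)^2) = (1::real)"
  obtains k where "k < d" "w k \<noteq> 0"
proof (rule ccontr)
  assume "\<not> thesis"
  then have "\<forall>k<d. w k = 0" using that by blast
  then have "(\<Sum>k<d. (w k)^2) = 0" by simp
  then show False using assms by simp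
qed

lemma altitude_hyperplane_reflection:
  assumes w: "(\<Sum>k<d. (w k)^2) = 1"
  shows "altitude d w (hyperplane_reflection d w a y) = 2 * a - altitude d w y"
proof -
  have "altitude d w (hyperplane_reflection d w a y) = (\<Sum>k<d. w k * y k - 2 * (altitude d w y - a) * (w k)^2)"
    unfolding altitude_def hyperplane_reflection_def
    by (intro sum.cong) (auto simp: power2_eq_square algebra_simps)
  also have "\<dots> = altitude d w y - 2 * (altitude d w y - a) * (\<Sum>k<d. (w k)^2)"
    by (simp add: sum_subtractf sum_distrib_left altitude_def)
  finally show ?thesis using w by simp
qed

lemma sum_sq_diff_hyperplane_reflection:
  assumes w: "(\<Sum>k<d. (w k)^2) = 1"
  shows "(\<Sum>k<d. (hyperplane_reflection d w a y k - x k)^2)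
    = (\<Sum>k<d. (y k - x k)^2) + 4 * (altitude d w y - a) * (altitude d w x - a)"
proof -
  define c where "c = altitude d w y - a"
  have "(\<Sum>k<d. (hyperplane_reflection d w a y k - x k)^2)
      = (\<Sum>k<d. (y k - x k)^2 - 4 * c * (w k * y k - w k * x k) + 4 * c^2 * (w k)^2)"
    unfolding hyperplane_reflection_def c_def
    by (intro sum.cong) (auto simp: power2_eq_square algebra_simps)
  also have "\<dots> = (\<Sum>k<d. (y k - x k)^2) - 4 * c * (altitude d w y - altitude d w x) + 4 * c^2 * (\<Sum>k<d. (w k)^2)"
    by (simp add: altitude_def sum.distrib sum_subtractf sum_distrib_left right_diff_distrib)
  also have "\<dots> = (\<Sum>k<d. (y k - x k)^2) + 4 * (altitude d w y - a) * (altitude d w x - a)"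
    using w by (simp add: c_def power2_eq_square algebra_simps)
  finally show ?thesis .
qed

text \<open>Choosing \<open>k\<^sub>0\<close> with \<open>w k\<^sub>0 \<noteq> 0\<close>, the reflection factors as: replace \<open>y k\<^sub>0\<close> by the altitude
  \<open>s\<close> (factor \<open>1/\<bar>w k\<^sub>0\<bar>\<close>); subtract \<open>2 s w k\<close> from the other coordinates (factor 1); solve back
  for coordinate \<open>k\<^sub>0\<close> (factor \<open>\<bar>w k\<^sub>0\<bar>\<close>); translate by \<open>2 a w\<close>.\<close>

lemma scales_volume_hyperplane_reflection:
  assumes w: "(\<Sum>k<d. (w k)^2) = 1"
  shows "scales_volume d 1 (hyperplane_reflection d w a)"
proof -
  obtain k0 where k0: "k0 < d" "w k0 \<noteq> 0" using unit_vector_has_nonzero_coord[OF w] .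
  define J where "J = {..<d} - {k0}"
  have J: "finite J" "J \<subseteq> {..<d}" "k0 \<notin> J" "{..<d} = insert k0 J" using k0 by (auto simp: J_def)
  define f where "f y = (\<Sum>j\<in>J. w j * y j)" for y :: "nat \<Rightarrow> real"
  have f_meas: "f \<in> borel_measurable (lborel_d d)" unfolding f_def by measurable (use J in auto)
  have f_upd: "f (y(k0 := v)) = f y" for y v unfolding f_def using J by (intro sum.cong) auto
  define F1 where "F1 y = y(k0 := w k0 * y k0 + f y)" for y :: "nat \<Rightarrow> real"
  define F2 where "F2 y = (\<lambda>k. if k \<in> J then 1 * y k + (-2 * w k * y k0) else y k)" for y :: "nat \<Rightarrow> real"
  define F3 where "F3 y = y(k0 := (-1 / w k0) * y k0 + - f y / w k0)" for y :: "nat \<Rightarrow> real"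
  define F4 where "F4 y = (\<lambda>k. if k < d then y k + 2 * a * w k else y k)" for y :: "nat \<Rightarrow> real"
  have F1: "scales_volume d (ennreal (1 / \<bar>w k0\<bar>)) F1"
    unfolding F1_def by (rule scales_volume_shear) (use k0 f_meas f_upd in auto)
  have F2: "scales_volume d (\<Prod>k\<in>J. ennreal (1 / \<bar>1\<bar>)) F2"
    unfolding F2_def by (rule scales_volume_parallel_shear) (use J k0 in \<open>auto simp: ignores_coords_def\<close>)
  have F3: "scales_volume d (ennreal (1 / \<bar>-1 / w k0\<bar>)) F3"
    unfolding F3_def by (rule scales_volume_shear) (use k0 f_meas f_upd in auto)
  have F4: "scales_volume d 1 F4"
    unfolding F4_def by (rule scales_volume_translation)
  have "scales_volume d (ennreal (1 / \<bar>w k0\<bar>) * 1 * ennreal (1 / \<bar>-1 / w k0\<bar>) * 1) (F4 \<circ> F3 \<circ> F2 \<circ> F1)"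
    using scales_volume_comp[OF scales_volume_comp[OF scales_volume_comp[OF F1 F2] F3] F4]
    by (simp add: comp_assoc)
  moreover have "ennreal (1 / \<bar>w k0\<bar>) * 1 * ennreal (1 / \<bar>-1 / w k0\<bar>) * 1 = 1"
    using k0 by (simp flip: ennreal_mult)
  ultimately have S: "scales_volume d 1 (F4 \<circ> F3 \<circ> F2 \<circ> F1)" by simp
  show ?thesis
  proof (rule scales_volume_cong[OF S])
    fix y :: "nat \<Rightarrow> real"
    define s where "s = altitude d w y"
    have s: "s = w k0 * y k0 + f y" unfolding s_def altitude_def f_def J(4) using J by simp
    have F21: "F2 (F1 y) k0 = s" "\<And>k. k \<in> J \<Longrightarrow> F2 (F1 y) k = y k - 2 * w k * s"
      "\<And>k. k \<notin> J \<Longrightarrow> k \<noteq> k0 \<Longrightarrow> F2 (F1 y) k = y k"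
      using J by (auto simp: F1_def F2_def s)
    have "f (F2 (F1 y)) = (\<Sum>j\<in>J. w j * y j - 2 * s * (w j)^2)"
      unfolding f_def by (intro sum.cong) (auto simp: F21 power2_eq_square algebra_simps)
    also have "\<dots> = f y - 2 * s * (\<Sum>j\<in>J. (w j)^2)"
      by (simp add: f_def sum_subtractf sum_distrib_left)
    also have "(\<Sum>j\<in>J. (w j)^2) = 1 - (w k0)^2"
      using w J by simp
    finally have "F3 (F2 (F1 y)) k0 = (- s - f y + 2 * s * (1 - (w k0)^2)) / w k0"
      using k0 by (simp add: F3_def F21 field_simps)
    also have "\<dots> = y k0 - 2 * s * w k0"
      using k0 by (simp add: s field_simps power2_eq_square)
    finally have k0_val: "F3 (F2 (F1 y)) k0 = y k0 - 2 * s * w k0" .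
    show "(F4 \<circ> F3 \<circ> F2 \<circ> F1) y = hyperplane_reflection d w a y"
    proof
      fix k
      show "(F4 \<circ> F3 \<circ> F2 \<circ> F1) y k = hyperplane_reflection d w a y k"
        using k0 k0_val F21 J
        by (cases "k = k0"; cases "k < d")
          (auto simp: F3_def F4_def hyperplane_reflection_def s_def algebra_simps)
    qed
  qed
qed

lemma dist_d_measurable[measurable]:
  assumes "f \<in> M \<rightarrow>\<^sub>M lborel_d d" "g \<in> M \<rightarrow>\<^sub>M lborel_d d"
  shows "(\<lambda>z. dist_d d (f z) (g z)) \<in> borel_measurable M"
  unfolding dist_d_def
  by measurable (auto intro: measurable_lborel_d_component[OF assms(1)] measurable_lborel_d_component[OF assms(2)])

lemma dist_d_const_measurable[measurable]: "(\<lambda>y. dist_d d y z) \<in> borel_measurable (lborel_d d)"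
  unfolding dist_d_def by measurable

lemma dist_d_eq_L2_set: "dist_d d x y = L2_set (\<lambda>k. x k - y k) {..<d}"
  by (simp add: dist_d_def L2_set_def)

lemma dist_d_le_iff: "0 \<le> r \<Longrightarrow> dist_d d y x \<le> r \<longleftrightarrow> (\<Sum>k<d. (y k - x k)^2) \<le> r^2"
  unfolding dist_d_def by (subst real_sqrt_le_iff') (auto intro: sum_nonneg)

lemma dist_d_triangle: "dist_d d x z \<le> dist_d d x y + dist_d d y z"
  using L2_set_triangle_ineq[of "\<lambda>k. x k - y k" "\<lambda>k. y k - z k" "{..<d}"]
  by (simp add: dist_d_eq_L2_set)

lemma dist_d_scale_zero: "dist_d d (\<lambda>k. c * x k) (\<lambda>_. 0) = \<bar>c\<bar> * dist_d d x (\<lambda>_. 0)"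
  by (simp add: dist_d_def power_mult_distrib sum_distrib_left[symmetric] real_sqrt_mult)

lemma dist_d_lincomb_zero_le:
  "dist_d d (\<lambda>k. a * u k + b * v k) (\<lambda>_. 0)
    \<le> \<bar>a\<bar> * dist_d d u (\<lambda>_. 0) + \<bar>b\<bar> * dist_d d v (\<lambda>_. 0)"
proof -
  have "dist_d d (\<lambda>k. a * u k + b * v k) (\<lambda>k. a * u k) = dist_d d (\<lambda>k. b * v k) (\<lambda>_. 0)"
    by (simp add: dist_d_def)
  then show ?thesis
    using dist_d_triangle[of d "\<lambda>k. a * u k + b * v k" "\<lambda>_. 0" "\<lambda>k. a * u k"]
    by (simp add: dist_d_scale_zero)
qed

lemma dist_d_unit_vector_zero: "(\<Sum>k<d. (w k)^2) = 1 \<Longrightarrow> dist_d d w (\<lambda>_. 0) = 1"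
  by (simp add: dist_d_def)

lemma altitude_diff_le_dist_d:
  assumes w: "(\<Sum>k<d. (w k)^2) = 1"
  shows "altitude d w y - altitude d w x \<le> dist_d d y x"
proof -
  have "altitude d w y - altitude d w x \<le> (\<Sum>k<d. \<bar>w k\<bar> * \<bar>y k - x k\<bar>)"
    unfolding altitude_def sum_subtractf[symmetric] right_diff_distrib[symmetric]
    by (intro sum_mono) (simp add: abs_mult[symmetric])
  also have "\<dots> \<le> L2_set w {..<d} * L2_set (\<lambda>k. y k - x k) {..<d}"
    by (rule L2_set_mult_ineq)
  also have "L2_set w {..<d} = 1" using w by (simp add: L2_set_def)
  finally show ?thesis by (simp add: dist_d_eq_L2_set)
qed

definition cball_d :: "nat \<Rightarrow> (nat \<Rightarrow> real) \<Rightarrow> real \<Rightarrow> (nat \<Rightarrow> real) set" where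
  "cball_d d z \<rho> = {y \<in> space (lborel_d d). dist_d d y z \<le> \<rho>}"

lemma cball_d_sets[measurable]: "cball_d d z \<rho> \<in> sets (lborel_d d)"
  unfolding cball_d_def by measurable

lemma emeasure_cball_d:
  assumes "\<rho> > 0"
  shows "emeasure (lborel_d d) (cball_d d z \<rho>) = ennreal (unit_ball_vol (real d) * \<rho> ^ d)"
proof -
  define T where "T y = (\<lambda>k. if k < d then y k + - z k else y k)" for y :: "nat \<Rightarrow> real"
  define B0 where "B0 = {f. sqrt (\<Sum>i\<in>{..<d}. (f i)\<^sup>2) \<le> \<rho>} \<inter> space (lborel_d d)"
  have B0: "B0 \<in> sets (lborel_d d)" unfolding B0_def by measurable
  have "T y \<in> space (lborel_d d)" if "y \<in> space (lborel_d d)" for y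
    using that unfolding space_lborel_d PiE_iff extensional_def T_def by simp
  moreover have "(\<Sum>i<d. (T y i)\<^sup>2) = (\<Sum>i<d. (y i - z i)\<^sup>2)" for y
    by (intro sum.cong) (auto simp: T_def)
  ultimately have "cball_d d z \<rho> = T -` B0 \<inter> space (lborel_d d)"
    unfolding B0_def cball_d_def dist_d_def by auto
  also have "emeasure (lborel_d d) \<dots> = emeasure (lborel_d d) B0"
    using scales_volume_translation[of d "\<lambda>k. - z k"] B0 unfolding T_def scales_volume_def by simp
  also have "\<dots> = ennreal (unit_ball_vol (real d) * \<rho> ^ d)"
    unfolding B0_def using emeasure_cball_aux[of "{..<d}" \<rho>] assms by simp
  finally show ?thesis .
qed

lemma unit_ball_d_eq_cball_d: "unit_ball_d d = cball_d d (\<lambda>_. 0) 1"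
  unfolding unit_ball_d_def cball_d_def dist_d_def space_lborel_d by simp

lemma unit_ball_d_sets[measurable]: "unit_ball_d d \<in> sets (lborel_d d)"
  by (simp add: unit_ball_d_eq_cball_d)

lemma unit_ball_d_subset_space: "unit_ball_d d \<subseteq> space (lborel_d d)"
  by (simp add: unit_ball_d_def space_lborel_d)

lemma mem_unit_ball_d_iff: "y \<in> unit_ball_d d \<longleftrightarrow> y \<in> space (lborel_d d) \<and> (\<Sum>k<d. (y k)^2) \<le> 1"
  by (simp add: unit_ball_d_def space_lborel_d)

lemma dist_d_zero_le_1: "x \<in> unit_ball_d d \<Longrightarrow> dist_d d x (\<lambda>_. 0) \<le> 1"
  by (simp add: unit_ball_d_def dist_d_def)

lemma emeasure_unit_ball_d: "emeasure (lborel_d d) (unit_ball_d d) = ennreal (unit_ball_vol (real d))"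
  using emeasure_cball_d[of 1 d "\<lambda>_. 0"] by (simp add: unit_ball_d_eq_cball_d)

lemma emeasure_subset_unit_ball_d:
  assumes "A \<subseteq> unit_ball_d d"
  shows "emeasure (lborel_d d) A = ennreal (measure (lborel_d d) A)"
proof (rule emeasure_eq_ennreal_measure)
  have "emeasure (lborel_d d) A \<le> emeasure (lborel_d d) (unit_ball_d d)"
    by (rule emeasure_mono[OF assms]) simp
  then show "emeasure (lborel_d d) A \<noteq> \<top>"
    by (auto simp: emeasure_unit_ball_d top_unique)
qed

lemma measure_cball_d_le:
  assumes "cball_d d z \<rho> \<subseteq> A" "A \<in> sets (lborel_d d)" "A \<subseteq> unit_ball_d d" "0 < \<rho>"
  shows "unit_ball_vol (real d) * \<rho> ^ d \<le> measure (lborel_d d) A"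
proof -
  have "ennreal (unit_ball_vol (real d) * \<rho> ^ d) \<le> emeasure (lborel_d d) A"
    using emeasure_mono[OF assms(1,2)] emeasure_cball_d[OF assms(4)] by simp
  then show ?thesis by (simp add: emeasure_subset_unit_ball_d[OF assms(3)])
qed

lemma emeasure_hyperplane:
  assumes w: "(\<Sum>k<d. (w k)^2) = 1"
  shows "emeasure (lborel_d d) {y \<in> space (lborel_d d). altitude d w y = a} = 0"
proof -
  interpret product_sigma_finite "\<lambda>_::nat. lborel :: real measure" by standard
  obtain k0 where k0: "k0 < d" "w k0 \<noteq> 0" using unit_vector_has_nonzero_coord[OF w] .
  define J where "J = {..<d} - {k0}"
  have J: "finite J" "k0 \<notin> J" "{..<d} = insert k0 J" using k0 by (auto simp: J_def)
  define P where "P = {y \<in> space (lborel_d d). altitude d w y = a}"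
  have P_sets: "P \<in> sets (lborel_d d)" unfolding P_def by measurable
  have fiber: "(\<integral>\<^sup>+ v. indicator P (x(k0 := v)) \<partial>lborel) = 0" for x :: "nat \<Rightarrow> real"
  proof -
    define c where "c = (a - (\<Sum>j\<in>J. w j * x j)) / w k0"
    have "altitude d w (x(k0 := v)) = w k0 * v + (\<Sum>j\<in>J. w j * x j)" for v
      unfolding altitude_def J(3) using J by (simp, intro sum.cong) auto
    then have "indicator P (x(k0 := v)) \<le> (indicator {c} v :: ennreal)" for v
      using k0 by (auto simp: P_def c_def field_simps indicator_def)
    then have "(\<integral>\<^sup>+ v. indicator P (x(k0 := v)) \<partial>lborel) \<le> (\<integral>\<^sup>+ v. indicator {c} v \<partial>lborel)"
      by (intro nn_integral_mono) auto
    then show ?thesis by simp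
  qed
  have "emeasure (lborel_d d) P = (\<integral>\<^sup>+ y. indicator P y \<partial>lborel_d d)" using P_sets by simp
  also have "\<dots> = (\<integral>\<^sup>+ x. (\<integral>\<^sup>+ v. indicator P (x(k0 := v)) \<partial>lborel) \<partial>PiM J (\<lambda>_. lborel))"
    unfolding J(3) by (rule product_nn_integral_insert) (use J P_sets[unfolded J(3)] in auto)
  also have "\<dots> = 0" by (simp add: fiber)
  finally show ?thesis by (simp add: P_def)
qed

section \<open>The neighbourhood of a sensor\<close>

definition nbhd :: "nat \<Rightarrow> real \<Rightarrow> (nat \<Rightarrow> real) \<Rightarrow> (nat \<Rightarrow> real) set" where
  "nbhd d r x = {y \<in> unit_ball_d d. dist_d d y x \<le> r}"

definition nbhd_below :: "nat \<Rightarrow> (nat \<Rightarrow> real) \<Rightarrow> real \<Rightarrow> (nat \<Rightarrow> real) \<Rightarrow> (nat \<Rightarrow> real) set" where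
  "nbhd_below d w r x = {y \<in> nbhd d r x. altitude d w y < altitude d w x}"

definition nbhd_above_pos :: "nat \<Rightarrow> (nat \<Rightarrow> real) \<Rightarrow> real \<Rightarrow> (nat \<Rightarrow> real) \<Rightarrow> (nat \<Rightarrow> real) set" where
  "nbhd_above_pos d w r x = {y \<in> nbhd d r x. altitude d w x \<le> altitude d w y \<and> 0 \<le> altitude d w y}"

definition nbhd_above_neg :: "nat \<Rightarrow> (nat \<Rightarrow> real) \<Rightarrow> real \<Rightarrow> (nat \<Rightarrow> real) \<Rightarrow> (nat \<Rightarrow> real) set" where
  "nbhd_above_neg d w r x = {y \<in> nbhd d r x. altitude d w x \<le> altitude d w y \<and> altitude d w y < 0}"

lemma nbhd_subset_unit_ball_d: "nbhd d r x \<subseteq> unit_ball_d d"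
  by (auto simp: nbhd_def)

lemma nbhd_parts_subset_unit_ball_d:
  "nbhd_below d w r x \<subseteq> unit_ball_d d" "nbhd_above_pos d w r x \<subseteq> unit_ball_d d"
  "nbhd_above_neg d w r x \<subseteq> unit_ball_d d"
  by (auto simp: nbhd_below_def nbhd_above_pos_def nbhd_above_neg_def nbhd_def)

lemma nbhd_sets[measurable]: "nbhd d r x \<in> sets (lborel_d d)"
proof -
  have "nbhd d r x = unit_ball_d d \<inter> {y \<in> space (lborel_d d). dist_d d y x \<le> r}"
    using unit_ball_d_subset_space by (auto simp: nbhd_def)
  also have "\<dots> \<in> sets (lborel_d d)" by measurable
  finally show ?thesis .
qed

lemma nbhd_altitude_sets[measurable]:
  assumes [measurable]: "Measurable.pred borel P"
  shows "{y \<in> nbhd d r x. P (altitude d w y)} \<in> sets (lborel_d d)"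
proof -
  have "{y \<in> nbhd d r x. P (altitude d w y)} = nbhd d r x \<inter> {y \<in> space (lborel_d d). P (altitude d w y)}"
    using nbhd_subset_unit_ball_d unit_ball_d_subset_space by blast
  also have "\<dots> \<in> sets (lborel_d d)" by measurable
  finally show ?thesis .
qed

lemma nbhd_below_sets[measurable]: "nbhd_below d w r x \<in> sets (lborel_d d)"
  unfolding nbhd_below_def by (rule nbhd_altitude_sets) measurable

lemma nbhd_above_pos_sets[measurable]: "nbhd_above_pos d w r x \<in> sets (lborel_d d)"
  unfolding nbhd_above_pos_def by (rule nbhd_altitude_sets) measurable

lemma nbhd_above_neg_sets[measurable]: "nbhd_above_neg d w r x \<in> sets (lborel_d d)"
  unfolding nbhd_above_neg_def by (rule nbhd_altitude_sets) measurable

lemma sum_sq_diff_hyperplane_reflection_le: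
  assumes w: "(\<Sum>k<d. (w k)^2) = 1" and "altitude d w z \<le> a" "a \<le> altitude d w y"
  shows "(\<Sum>k<d. (hyperplane_reflection d w a y k - z k)^2) \<le> (\<Sum>k<d. (y k - z k)^2)"
proof -
  have "4 * (altitude d w y - a) * (altitude d w z - a) \<le> 0"
    using assms by (intro mult_nonneg_nonpos) auto
  then show ?thesis using sum_sq_diff_hyperplane_reflection[OF w, of a y z] by linarith
qed

text \<open>Both \<open>x\<close> and the origin lie below the hyperplane, and reflecting a point from above
  brings it closer to every point below.\<close>

lemma hyperplane_reflection_mem_nbhd:
  assumes w: "(\<Sum>k<d. (w k)^2) = 1" and r: "0 \<le> r"
    and a: "altitude d w x \<le> a" "0 \<le> a"
    and y: "y \<in> nbhd d r x" "a < altitude d w y"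
  shows "hyperplane_reflection d w a y \<in> nbhd d r x"
    and "altitude d w (hyperplane_reflection d w a y) < a"
proof -
  have ys: "y \<in> space (lborel_d d)" "(\<Sum>k<d. (y k - 0)^2) \<le> 1" "(\<Sum>k<d. (y k - x k)^2) \<le> r^2"
    using y r by (auto simp: nbhd_def mem_unit_ball_d_iff dist_d_le_iff)
  have "hyperplane_reflection d w a y \<in> space (lborel_d d)"
    using ys(1) unfolding space_lborel_d PiE_iff extensional_def hyperplane_reflection_def by simp
  moreover have "(\<Sum>k<d. (hyperplane_reflection d w a y k - x k)^2) \<le> r^2"
    using sum_sq_diff_hyperplane_reflection_le[OF w, of x a y] a y ys by linarith
  moreover have "(\<Sum>k<d. (hyperplane_reflection d w a y k - 0)^2) \<le> 1"
    using sum_sq_diff_hyperplane_reflection_le[OF w, of "\<lambda>_. 0" a y] a y ys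
    by (simp add: altitude_def)
  ultimately show "hyperplane_reflection d w a y \<in> nbhd d r x"
    using r by (simp add: nbhd_def mem_unit_ball_d_iff dist_d_le_iff)
  show "altitude d w (hyperplane_reflection d w a y) < a"
    using altitude_hyperplane_reflection[OF w] y by simp
qed

lemma emeasure_nbhd_upper_le_lower:
  assumes w: "(\<Sum>k<d. (w k)^2) = 1" and r: "0 \<le> r"
    and a: "altitude d w x \<le> a" "0 \<le> a"
  shows "emeasure (lborel_d d) {y \<in> nbhd d r x. a \<le> altitude d w y}
    \<le> emeasure (lborel_d d) {y \<in> nbhd d r x. altitude d w y < a}"
proof -
  let ?M = "lborel_d d" and ?R = "hyperplane_reflection d w a"
  let ?upper = "{y \<in> nbhd d r x. a < altitude d w y}"
  let ?lower = "{y \<in> nbhd d r x. altitude d w y < a}"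
  let ?P = "{y \<in> space ?M. altitude d w y = a}"
  have R: "scales_volume d 1 ?R" by (rule scales_volume_hyperplane_reflection[OF w])
  have lower_sets: "?lower \<in> sets ?M" by measurable
  have "?upper \<subseteq> ?R -` ?lower \<inter> space ?M"
    using hyperplane_reflection_mem_nbhd[OF w r a] nbhd_subset_unit_ball_d unit_ball_d_subset_space
    by blast
  then have "emeasure ?M ?upper \<le> emeasure ?M (?R -` ?lower \<inter> space ?M)"
    by (rule emeasure_mono) (use R lower_sets in \<open>auto simp: scales_volume_def intro: measurable_sets\<close>)
  also have "\<dots> = emeasure ?M ?lower"
    using R lower_sets unfolding scales_volume_def by (simp only: mult_1)
  finally have upper: "emeasure ?M ?upper \<le> emeasure ?M ?lower" .
  have "{y \<in> nbhd d r x. a \<le> altitude d w y} \<subseteq> ?upper \<union> ?P"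
    using nbhd_subset_unit_ball_d unit_ball_d_subset_space by force
  then have "emeasure ?M {y \<in> nbhd d r x. a \<le> altitude d w y} \<le> emeasure ?M (?upper \<union> ?P)"
    by (rule emeasure_mono) measurable
  also have "\<dots> \<le> emeasure ?M ?upper + emeasure ?M ?P"
    by (rule emeasure_subadditive) measurable
  also have "\<dots> \<le> emeasure ?M ?lower"
    using upper emeasure_hyperplane[OF w] by simp
  finally show ?thesis .
qed

lemma emeasure_nbhd_above_pos_le:
  assumes w: "(\<Sum>k<d. (w k)^2) = 1" and r: "0 \<le> r"
  shows "emeasure (lborel_d d) (nbhd_above_pos d w r x)
    \<le> emeasure (lborel_d d) (nbhd_below d w r x) + emeasure (lborel_d d) (nbhd_above_neg d w r x)"
proof -
  define a where "a = max (altitude d w x) 0"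
  have "nbhd_above_pos d w r x = {y \<in> nbhd d r x. a \<le> altitude d w y}"
    by (auto simp: nbhd_above_pos_def a_def)
  also have "emeasure (lborel_d d) \<dots> \<le> emeasure (lborel_d d) {y \<in> nbhd d r x. altitude d w y < a}"
    using w r by (rule emeasure_nbhd_upper_le_lower) (auto simp: a_def)
  also have "{y \<in> nbhd d r x. altitude d w y < a} = nbhd_below d w r x \<union> nbhd_above_neg d w r x"
    by (auto simp: nbhd_below_def nbhd_above_neg_def a_def)
  also have "emeasure (lborel_d d) \<dots>
      \<le> emeasure (lborel_d d) (nbhd_below d w r x) + emeasure (lborel_d d) (nbhd_above_neg d w r x)"
    by (rule emeasure_subadditive) measurable
  finally show ?thesis .
qed

lemma cball_d_subset_nbhd:
  assumes "dist_d d z x + \<rho> \<le> r" "dist_d d z (\<lambda>_. 0) + \<rho> \<le> 1"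
  shows "cball_d d z \<rho> \<subseteq> nbhd d r x"
proof
  fix y assume y: "y \<in> cball_d d z \<rho>"
  then have "dist_d d y x \<le> r" "dist_d d y (\<lambda>_. 0) \<le> 1"
    using assms dist_d_triangle[of d y x z] dist_d_triangle[of d y "\<lambda>_. 0" z]
    by (auto simp: cball_d_def)
  then show "y \<in> nbhd d r x"
    using y by (simp add: nbhd_def mem_unit_ball_d_iff cball_d_def dist_d_def)
qed

lemma cball_d_subset_nbhd_centre:
  assumes x: "x \<in> unit_ball_d d" and r: "0 < r" "r \<le> 1/2"
  shows "cball_d d (\<lambda>k. (1 - r/2) * x k) (r/16) \<subseteq> nbhd d r x"
proof (rule cball_d_subset_nbhd)
  have "dist_d d (\<lambda>k. (1 - r/2) * x k) x = dist_d d (\<lambda>k. (- r/2) * x k) (\<lambda>_. 0)"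
    by (simp add: dist_d_def algebra_simps)
  also have "\<dots> = r/2 * dist_d d x (\<lambda>_. 0)"
    using dist_d_scale_zero[of d "- r/2" x] r by simp
  also have "\<dots> \<le> r/2"
    using dist_d_zero_le_1[OF x] r by (simp add: mult_left_le)
  finally show "dist_d d (\<lambda>k. (1 - r/2) * x k) x + r/16 \<le> r" using r by simp
  have "dist_d d (\<lambda>k. (1 - r/2) * x k) (\<lambda>_. 0) = (1 - r/2) * dist_d d x (\<lambda>_. 0)"
    using dist_d_scale_zero[of d "1 - r/2" x] r by simp
  also have "\<dots> \<le> 1 - r/2"
    using dist_d_zero_le_1[OF x] r by (simp add: mult_left_le)
  finally show "dist_d d (\<lambda>k. (1 - r/2) * x k) (\<lambda>_. 0) + r/16 \<le> 1" using r by simp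
qed

lemma cball_d_subset_nbhd_below:
  assumes w: "(\<Sum>k<d. (w k)^2) = 1" and x: "x \<in> unit_ball_d d" and r: "0 < r" "r \<le> 1/2"
    and t: "-1/2 \<le> altitude d w x"
  shows "cball_d d (\<lambda>k. (1 - r/4) * x k - (r/4) * w k) (r/16) \<subseteq> nbhd_below d w r x"
proof -
  define z where "z = (\<lambda>k. (1 - r/4) * x k - (r/4) * w k)"
  define t where "t = altitude d w x"
  define S where "S = (\<Sum>k<d. (x k)^2)"
  have S: "0 \<le> S" "S \<le> 1" using x by (auto simp: S_def mem_unit_ball_d_iff intro: sum_nonneg)
  have "dist_d d z x = dist_d d (\<lambda>k. (- r/4) * x k + (- r/4) * w k) (\<lambda>_. 0)"
    by (simp add: z_def dist_d_def algebra_simps)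
  also have "\<dots> \<le> r/4 * dist_d d x (\<lambda>_. 0) + r/4 * dist_d d w (\<lambda>_. 0)"
    using dist_d_lincomb_zero_le[of d "- r/4" x "- r/4" w] r by simp
  also have "\<dots> \<le> r/4 * 1 + r/4 * 1"
    using dist_d_zero_le_1[OF x] dist_d_unit_vector_zero[OF w] r by (intro add_mono mult_left_mono) auto
  finally have z_x: "dist_d d z x + r/16 \<le> r" using r by linarith
  have "(\<Sum>k<d. (z k)^2) = (\<Sum>k<d. (1 - r/4)^2 * (x k)^2 - 2 * (1 - r/4) * (r/4) * (w k * x k) + (r/4)^2 * (w k)^2)"
    unfolding z_def by (intro sum.cong) (auto simp: power2_eq_square algebra_simps)
  also have "\<dots> = (1 - r/4)^2 * S - 2 * (1 - r/4) * (r/4) * t + (r/4)^2 * (\<Sum>k<d. (w k)^2)"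
    by (simp add: sum.distrib sum_subtractf sum_distrib_left S_def t_def altitude_def)
  also have "\<dots> = (1 - r/4)^2 * S - 2 * (1 - r/4) * (r/4) * t + (r/4)^2"
    using w by simp
  also have "\<dots> \<le> (1 - r/4)^2 - 2 * (1 - r/4) * (r/4) * (-1/2) + (r/4)^2"
    using S t r by (intro add_mono diff_mono mult_left_mono mult_left_le) (auto simp: t_def)
  also have "\<dots> \<le> (1 - r/16)^2"
    using r by (simp add: power2_eq_square field_simps)
  finally have "dist_d d z (\<lambda>_. 0) \<le> 1 - r/16"
    using r real_sqrt_le_mono[of "\<Sum>k<d. (z k)^2" "(1 - r/16)^2"] by (simp add: dist_d_def)
  then have z_0: "dist_d d z (\<lambda>_. 0) + r/16 \<le> 1" by simp
  have "altitude d w z = (1 - r/4) * t - r/4 * (\<Sum>k<d. (w k)^2)"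
    by (simp add: z_def t_def altitude_def algebra_simps power2_eq_square sum_subtractf sum_distrib_left sum.distrib)
  then have alt_z: "altitude d w z = (1 - r/4) * t - r/4"
    using w by simp
  show ?thesis
  proof
    fix y assume y: "y \<in> cball_d d (\<lambda>k. (1 - r/4) * x k - (r/4) * w k) (r/16)"
    then have "y \<in> nbhd d r x" using cball_d_subset_nbhd[OF z_x z_0] by (auto simp: z_def)
    moreover have "altitude d w y < altitude d w x"
    proof -
      have "dist_d d y z \<le> r/16" using y by (simp add: cball_d_def z_def)
      moreover have "r/4 * (- t) \<le> r/4 * (1/2)" using t r by (intro mult_left_mono) (auto simp: t_def)
      ultimately show ?thesis
        using altitude_diff_le_dist_d[OF w, of y z] alt_z r by (simp add: t_def algebra_simps)
    qed
    ultimately show "y \<in> nbhd_below d w r x" by (simp add: nbhd_below_def)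
  qed
qed

lemma measure_nbhd_le:
  assumes "0 < r"
  shows "measure (lborel_d d) (nbhd d r x) \<le> unit_ball_vol (real d) * r ^ d"
proof -
  have "nbhd d r x \<subseteq> cball_d d x r"
    using unit_ball_d_subset_space by (auto simp: nbhd_def cball_d_def)
  then have "emeasure (lborel_d d) (nbhd d r x) \<le> emeasure (lborel_d d) (cball_d d x r)"
    by (rule emeasure_mono) simp
  then show ?thesis
    using assms by (simp add: emeasure_cball_d emeasure_subset_unit_ball_d[OF nbhd_subset_unit_ball_d])
qed

lemma measure_nbhd_split:
  "measure (lborel_d d) (nbhd d r x) = measure (lborel_d d) (nbhd_below d w r x)
    + measure (lborel_d d) (nbhd_above_pos d w r x) + measure (lborel_d d) (nbhd_above_neg d w r x)"
proof -
  let ?M = "lborel_d d" and ?B = "nbhd_below d w r x"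
    and ?P = "nbhd_above_pos d w r x" and ?N = "nbhd_above_neg d w r x"
  have fin: "emeasure ?M A \<noteq> \<infinity>" if "A \<subseteq> nbhd d r x" for A
    using emeasure_subset_unit_ball_d[of A d] that nbhd_subset_unit_ball_d[of d r x] by auto
  have "nbhd d r x = (?B \<union> ?P) \<union> ?N"
    by (auto simp: nbhd_below_def nbhd_above_pos_def nbhd_above_neg_def)
  moreover have "measure ?M ((?B \<union> ?P) \<union> ?N) = measure ?M (?B \<union> ?P) + measure ?M ?N"
    by (rule measure_Union[OF fin fin]) (auto simp: nbhd_below_def nbhd_above_pos_def nbhd_above_neg_def)
  ultimately have "measure ?M (nbhd d r x) = measure ?M (?B \<union> ?P) + measure ?M ?N"
    by simp
  also have "measure ?M (?B \<union> ?P) = measure ?M ?B + measure ?M ?P"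
    by (rule measure_Union[OF fin fin]) (auto simp: nbhd_below_def nbhd_above_pos_def)
  finally show ?thesis .
qed

lemma measure_unit_ball_d_split:
  "measure (lborel_d d) (unit_ball_d d - nbhd d r x) + measure (lborel_d d) (nbhd d r x)
    = unit_ball_vol (real d)"
proof -
  let ?M = "lborel_d d" and ?R = "unit_ball_d d - nbhd d r x"
  have "measure ?M (?R \<union> nbhd d r x) = measure ?M ?R + measure ?M (nbhd d r x)"
    using nbhd_subset_unit_ball_d[of d r x]
    by (intro measure_Union) (auto simp: emeasure_subset_unit_ball_d)
  moreover have "?R \<union> nbhd d r x = unit_ball_d d"
    using nbhd_subset_unit_ball_d[of d r x] by blast
  moreover have "measure ?M (unit_ball_d d) = unit_ball_vol (real d)"
    using unit_ball_vol_pos[of "real d"] by (simp add: measure_def emeasure_unit_ball_d)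
  ultimately show ?thesis by simp
qed

lemma nbhd_above_pos_empty:
  assumes w: "(\<Sum>k<d. (w k)^2) = 1" and "altitude d w x < - r"
  shows "nbhd_above_pos d w r x = {}"
proof -
  have "\<not> (dist_d d y x \<le> r \<and> 0 \<le> altitude d w y)" for y
    using altitude_diff_le_dist_d[OF w, of y x] assms(2) by linarith
  then show ?thesis by (auto simp: nbhd_above_pos_def nbhd_def)
qed

lemma measure_nbhd_drift:
  assumes w: "(\<Sum>k<d. (w k)^2) = 1" and x: "x \<in> unit_ball_d d" and r: "0 < r" "r \<le> 1/2"
    and \<eta>: "0 < \<eta>" "\<eta> < 1/2"
  shows "2 * min \<eta> (1/2 - \<eta>) * (unit_ball_vol (real d) * (r/16)^d)
    \<le> measure (lborel_d d) (nbhd_below d w r x)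
      - (1 - 2*\<eta>) * (measure (lborel_d d) (nbhd_above_pos d w r x) - measure (lborel_d d) (nbhd_above_neg d w r x))"
proof -
  define mB where "mB = measure (lborel_d d) (nbhd_below d w r x)"
  define mP where "mP = measure (lborel_d d) (nbhd_above_pos d w r x)"
  define mN where "mN = measure (lborel_d d) (nbhd_above_neg d w r x)"
  define v where "v = unit_ball_vol (real d) * (r/16)^d"
  define \<phi> where "\<phi> = min \<eta> (1/2 - \<eta>)"
  have v: "0 \<le> v" using r by (simp add: v_def)
  have m: "0 \<le> mB" "0 \<le> mN" by (auto simp: mB_def mN_def)
  have \<phi>: "2 * \<phi> \<le> 2 * \<eta>" "2 * \<phi> \<le> 1 - 2 * \<eta>" "0 \<le> \<phi>" using \<eta> by (auto simp: \<phi>_def min_def)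
  have "2 * \<phi> * v \<le> mB - (1 - 2*\<eta>) * (mP - mN)"
  proof (cases "-1/2 \<le> altitude d w x")
    case True
    have "ennreal mP \<le> ennreal mB + ennreal mN"
      using emeasure_nbhd_above_pos_le[OF w, of r x] r
      by (simp add: mB_def mP_def mN_def emeasure_subset_unit_ball_d nbhd_parts_subset_unit_ball_d)
    then have "mP \<le> mB + mN" using m by (simp flip: ennreal_plus)
    then have "2 * \<eta> * mB \<le> mB - (1 - 2*\<eta>) * (mP - mN)"
      using mult_left_mono[of "mP - mN" mB "1 - 2*\<eta>"] \<eta> by (simp add: algebra_simps)
    moreover have "v \<le> mB" unfolding v_def mB_def
      using cball_d_subset_nbhd_below[OF w x r True] nbhd_parts_subset_unit_ball_d r by (intro measure_cball_d_le) auto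
    then have "2 * \<phi> * v \<le> 2 * \<eta> * mB" using \<phi> v by (intro mult_mono) auto
    ultimately show ?thesis by linarith
  next
    case False
    then have "mP = 0" using nbhd_above_pos_empty[OF w] r by (simp add: mP_def)
    moreover have "v \<le> measure (lborel_d d) (nbhd d r x)" unfolding v_def
      using cball_d_subset_nbhd_centre[OF x r] nbhd_subset_unit_ball_d r
      by (intro measure_cball_d_le) auto
    ultimately have "v \<le> mB + mN" using measure_nbhd_split[of d r x w] by (simp add: mB_def mP_def mN_def)
    then have "2 * \<phi> * v \<le> (1 - 2*\<eta>) * (mB + mN)" using \<phi> v by (intro mult_mono) auto
    also have "\<dots> \<le> mB - (1 - 2*\<eta>) * (mP - mN)"
      using \<open>mP = 0\<close> m \<eta> mult_left_le_one_le[of mB "1 - 2*\<eta>"] by (simp add: algebra_simps)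
    finally show ?thesis .
  qed
  then show ?thesis by (simp add: mB_def mP_def mN_def v_def \<phi>_def)
qed

section \<open>Votes and their exponential moment\<close>

text \<open>When the sensor at \<open>x\<close> updates after every sensor below it has switched to \<open>-1\<close>, the
  sensor \<open>p\<close> contributes at most \<open>vote d r w x p\<close> to minus the neighbourhood sum.\<close>

definition vote :: "nat \<Rightarrow> real \<Rightarrow> (nat \<Rightarrow> real) \<Rightarrow> (nat \<Rightarrow> real) \<Rightarrow> (nat \<Rightarrow> real) \<times> bool \<Rightarrow> real" where
  "vote d r w x p = (if dist_d d (fst p) x \<le> r then
      (if altitude d w (fst p) < altitude d w x then 1
       else - real_of_int (if snd p then - target d w (fst p) else target d w (fst p))) else 0)"

lemma target_eq_altitude: "target d w y = (if 0 \<le> altitude d w y then 1 else -1)"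
  by (simp add: target_def altitude_def)

lemma vote_measurable[measurable]:
  assumes [measurable]: "f \<in> M \<rightarrow>\<^sub>M lborel_d d" "g \<in> M \<rightarrow>\<^sub>M lborel_d d" "b \<in> M \<rightarrow>\<^sub>M count_space UNIV"
  shows "(\<lambda>z. vote d r w (f z) (g z, b z)) \<in> borel_measurable M"
proof -
  have "(\<lambda>z. vote d r w (f z) (g z, b z)) = (\<lambda>z. if dist_d d (g z) (f z) \<le> r then
      (if altitude d w (g z) < altitude d w (f z) then 1
       else if b z = (0 \<le> altitude d w (g z)) then 1 else -1) else 0)"
    by (auto simp: vote_def target_eq_altitude fun_eq_iff)
  also have "\<dots> \<in> borel_measurable M" by measurable
  finally show ?thesis .
qed

abbreviation sensor_law :: "nat \<Rightarrow> real \<Rightarrow> ((nat \<Rightarrow> real) \<times> bool) measure" where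
  "sensor_law d \<eta> \<equiv> uniform_ball d \<Otimes>\<^sub>M measure_pmf (bernoulli_pmf \<eta>)"

lemma prob_space_uniform_ball: "prob_space (uniform_ball d)"
  unfolding uniform_ball_def
proof (rule prob_space_uniform_measure)
  have "0 < unit_ball_vol (real d)" by simp
  then show "emeasure (lborel_d d) (unit_ball_d d) \<noteq> 0"
    by (simp add: emeasure_unit_ball_d del: unit_ball_vol_pos)
qed (simp_all add: emeasure_unit_ball_d)

lemma prob_space_sensor_law: "prob_space (sensor_law d \<eta>)"
  by (rule prob_space_pair[OF prob_space_uniform_ball prob_space_measure_pmf])

lemma sets_sensor_law: "sets (sensor_law d \<eta>) = sets (lborel_d d \<Otimes>\<^sub>M count_space UNIV)"
  by (rule sets_pair_measure_cong) (simp_all add: uniform_ball_def)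

lemma space_sensor_law: "space (sensor_law d \<eta>) = space (lborel_d d) \<times> UNIV"
  by (simp add: space_pair_measure uniform_ball_def)

lemma vote_measurable_sensor_law:
  assumes x: "x \<in> space (lborel_d d)"
  shows "vote d r w x \<in> borel_measurable (sensor_law d \<eta>)"
proof -
  have "(\<lambda>p. vote d r w x (fst p, snd p)) \<in> borel_measurable (lborel_d d \<Otimes>\<^sub>M count_space UNIV)"
    using x by measurable
  then show ?thesis by (subst measurable_cong_sets[OF sets_sensor_law refl]) simp
qed

lemma AE_sensor_law_unit_ball: "AE p in sensor_law d \<eta>. fst p \<in> unit_ball_d d"
proof -
  let ?C = "space (lborel_d d) - unit_ball_d d"
  have C_sets: "?C \<in> sets (lborel_d d)" by simp
  have "emeasure (uniform_ball d) ?C = 0"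
    unfolding uniform_ball_def by (simp add: emeasure_uniform_measure Int_Diff)
  then have "?C \<in> null_sets (uniform_ball d)"
    using C_sets by (simp add: null_sets_def uniform_ball_def)
  then have "?C \<times> space (measure_pmf (bernoulli_pmf \<eta>)) \<in> null_sets (sensor_law d \<eta>)"
    by (rule sigma_finite_measure.times_in_null_sets1[OF prob_space_imp_sigma_finite[OF prob_space_measure_pmf]]) simp
  then show ?thesis by (rule AE_I') (auto simp: space_sensor_law)
qed

lemma nn_integral_sensor_law:
  assumes F: "F \<in> borel_measurable (sensor_law d \<eta>)" and \<eta>: "0 < \<eta>" "\<eta> < 1"
  shows "(\<integral>\<^sup>+ p. F p \<partial>sensor_law d \<eta>)
    = (\<integral>\<^sup>+ y. (ennreal \<eta> * F (y, True) + ennreal (1 - \<eta>) * F (y, False)) * indicator (unit_ball_d d) y \<partial>lborel_d d)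
      / emeasure (lborel_d d) (unit_ball_d d)"
proof -
  have F': "F \<in> borel_measurable (lborel_d d \<Otimes>\<^sub>M count_space UNIV)"
    using F by (subst (asm) measurable_cong_sets[OF sets_sensor_law refl])
  have "(\<integral>\<^sup>+ p. F p \<partial>sensor_law d \<eta>) = (\<integral>\<^sup>+ y. (\<integral>\<^sup>+ b. F (y, b) \<partial>measure_pmf (bernoulli_pmf \<eta>)) \<partial>uniform_ball d)"
    by (rule sigma_finite_measure.nn_integral_fst[symmetric,
          OF prob_space_imp_sigma_finite[OF prob_space_measure_pmf] F])
  also have "\<dots> = (\<integral>\<^sup>+ y. ennreal \<eta> * F (y, True) + ennreal (1 - \<eta>) * F (y, False) \<partial>uniform_ball d)"
    using \<eta> by (intro nn_integral_cong) (simp add: nn_integral_measure_pmf_finite UNIV_bool mult.commute)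
  also have "\<dots> = (\<integral>\<^sup>+ y. (ennreal \<eta> * F (y, True) + ennreal (1 - \<eta>) * F (y, False)) * indicator (unit_ball_d d) y \<partial>lborel_d d)
      / emeasure (lborel_d d) (unit_ball_d d)"
    unfolding uniform_ball_def by (rule nn_integral_uniform_measure) (use F' in measurable)
  finally show ?thesis .
qed

lemma vote_mixture_eq:
  fixes s \<eta> :: real
  assumes y: "y \<in> unit_ball_d d"
  shows "\<eta> * exp (- s * vote d r w x (y, True)) + (1 - \<eta>) * exp (- s * vote d r w x (y, False))
    = (if y \<in> nbhd_below d w r x then exp (- s)
    else if y \<in> nbhd_above_pos d w r x then \<eta> * exp (- s) + (1 - \<eta>) * exp s
    else if y \<in> nbhd_above_neg d w r x then \<eta> * exp s + (1 - \<eta>) * exp (- s)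
    else 1)"
proof -
  consider "y \<notin> nbhd d r x"
    | "y \<in> nbhd_below d w r x"
    | "y \<in> nbhd_above_pos d w r x"
    | "y \<in> nbhd_above_neg d w r x"
    unfolding nbhd_below_def nbhd_above_pos_def nbhd_above_neg_def by force
  then show ?thesis
  proof cases
    case 1
    then have "vote d r w x (y, b) = 0" for b using y by (simp add: vote_def nbhd_def)
    then show ?thesis using 1
      by (simp add: nbhd_below_def nbhd_above_pos_def nbhd_above_neg_def)
  qed (auto simp: vote_def target_eq_altitude algebra_simps
         nbhd_below_def nbhd_above_pos_def nbhd_above_neg_def nbhd_def)
qed

lemma exp_minus_le_quadratic:
  fixes x :: real assumes "0 \<le> x" "x \<le> 1"
  shows "exp (- x) \<le> 1 - x + x^2"
proof -
  have q: "0 \<le> 1 - x + x^2" using assms by (simp add: power2_eq_square)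
  have "1 \<le> (1 + x) * (1 - x + x^2)" using assms by (simp add: power2_eq_square algebra_simps)
  also have "\<dots> \<le> exp x * (1 - x + x^2)" by (rule mult_right_mono[OF exp_ge_add_one_self q])
  finally have "exp (- x) * 1 \<le> exp (- x) * (exp x * (1 - x + x^2))" by (intro mult_left_mono) auto
  then show ?thesis by (simp add: exp_minus field_simps)
qed

text \<open>The second-order expansion of the exponentials at \<open>s = \<phi> / 16^d\<close>: the linear term is
  the drift, the quadratic one is controlled by the volume of the neighbourhood.\<close>

lemma exp_mixture_bound:
  fixes m0 m1 m2 m3 V r \<eta> \<phi> s :: real
  assumes m: "0 \<le> m0" "0 \<le> m1" "0 \<le> m2" "0 \<le> m3"
    and total: "m0 + (m1 + m2 + m3) = V"
    and nbhd: "m1 + m2 + m3 \<le> V * r^d"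
    and drift: "2 * \<phi> * (V * (r/16)^d) \<le> m1 - (1 - 2*\<eta>) * (m2 - m3)"
    and \<eta>: "0 \<le> \<eta>" "\<eta> \<le> 1" and \<phi>: "0 \<le> \<phi>" "\<phi> \<le> 1"
    and s: "s = \<phi> / 16^d"
  shows "m0 + exp (- s) * m1 + (\<eta> * exp (- s) + (1 - \<eta>) * exp s) * m2
    + (\<eta> * exp s + (1 - \<eta>) * exp (- s)) * m3 \<le> V * (1 - \<phi>^2 * (r/256)^d)"
proof -
  have "\<phi> \<le> 16^d" using \<phi> one_le_power[of "16::real" d] by linarith
  then have s01: "0 \<le> s" "s \<le> 1" using \<phi> s by (auto simp: divide_le_eq)
  have e1: "exp (- s) \<le> 1 - s + s^2" by (rule exp_minus_le_quadratic[OF s01])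
  have e2: "exp s \<le> 1 + s + s^2" by (rule exp_bound[OF s01])
  have "exp (- s) * m1 \<le> (1 - s + s^2) * m1" by (rule mult_right_mono[OF e1 m(2)])
  moreover have "(\<eta> * exp (- s) + (1 - \<eta>) * exp s) * m2 \<le> (1 + s^2 + s * (1 - 2*\<eta>)) * m2"
  proof (rule mult_right_mono[OF _ m(3)])
    have "\<eta> * exp (- s) \<le> \<eta> * (1 - s + s^2)" using e1 \<eta> by (intro mult_left_mono) auto
    moreover have "(1 - \<eta>) * exp s \<le> (1 - \<eta>) * (1 + s + s^2)" using e2 \<eta> by (intro mult_left_mono) auto
    ultimately show "\<eta> * exp (- s) + (1 - \<eta>) * exp s \<le> 1 + s^2 + s * (1 - 2*\<eta>)"
      by (simp add: algebra_simps)
  qed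
  moreover have "(\<eta> * exp s + (1 - \<eta>) * exp (- s)) * m3 \<le> (1 + s^2 - s * (1 - 2*\<eta>)) * m3"
  proof (rule mult_right_mono[OF _ m(4)])
    have "\<eta> * exp s \<le> \<eta> * (1 + s + s^2)" using e2 \<eta> by (intro mult_left_mono) auto
    moreover have "(1 - \<eta>) * exp (- s) \<le> (1 - \<eta>) * (1 - s + s^2)" using e1 \<eta> by (intro mult_left_mono) auto
    ultimately show "\<eta> * exp s + (1 - \<eta>) * exp (- s) \<le> 1 + s^2 - s * (1 - 2*\<eta>)"
      by (simp add: algebra_simps)
  qed
  moreover have "m0 + (1 - s + s^2) * m1 + (1 + s^2 + s * (1 - 2*\<eta>)) * m2 + (1 + s^2 - s * (1 - 2*\<eta>)) * m3
      = V + s^2 * (m1 + m2 + m3) - s * (m1 - (1 - 2*\<eta>) * (m2 - m3))"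
    using total by (simp add: algebra_simps)
  moreover have "s^2 * (m1 + m2 + m3) \<le> s^2 * (V * r^d)" using nbhd by (intro mult_left_mono) auto
  moreover have "s * (2 * \<phi> * (V * (r/16)^d)) \<le> s * (m1 - (1 - 2*\<eta>) * (m2 - m3))"
    using drift s01 by (intro mult_left_mono) auto
  moreover have "V + s^2 * (V * r^d) - s * (2 * \<phi> * (V * (r/16)^d)) = V * (1 - \<phi>^2 * (r/256)^d)"
  proof -
    have a: "(r/16)^d = r^d / 16^d" by (simp add: power_divide)
    have b: "(r/256)^d = r^d / (16^d * 16^d)" by (simp add: power_divide flip: power_mult_distrib)
    show ?thesis unfolding s a b by (simp add: power2_eq_square field_simps)
  qed
  ultimately show ?thesis by linarith
qed

lemma exp_moment_vote_eq:
  fixes s :: real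
  assumes x: "x \<in> unit_ball_d d" and \<eta>: "0 < \<eta>" "\<eta> < 1"
  shows "(\<integral>\<^sup>+ p. ennreal (exp (- s * vote d r w x p)) \<partial>sensor_law d \<eta>) = ennreal
    ((exp (- s) * measure (lborel_d d) (nbhd_below d w r x)
      + (\<eta> * exp (- s) + (1 - \<eta>) * exp s) * measure (lborel_d d) (nbhd_above_pos d w r x)
      + (\<eta> * exp s + (1 - \<eta>) * exp (- s)) * measure (lborel_d d) (nbhd_above_neg d w r x)
      + measure (lborel_d d) (unit_ball_d d - nbhd d r x)) / unit_ball_vol (real d))"
proof -
  define U where "U = unit_ball_d d"
  define R where "R = U - nbhd d r x"
  define c1 where "c1 = exp (- s)"
  define c2 where "c2 = \<eta> * exp (- s) + (1 - \<eta>) * exp s"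
  define c3 where "c3 = \<eta> * exp s + (1 - \<eta>) * exp (- s)"
  define G where "G y = \<eta> * exp (- s * vote d r w x (y, True)) + (1 - \<eta>) * exp (- s * vote d r w x (y, False))" for y
  have c: "0 \<le> c1" "0 \<le> c2" "0 \<le> c3" using \<eta> by (auto simp: c1_def c2_def c3_def)
  have R: "R \<in> sets (lborel_d d)" "R \<subseteq> unit_ball_d d" by (auto simp: R_def U_def)
  have "ennreal (G y) * indicator U y = ennreal c1 * indicator (nbhd_below d w r x) y
      + ennreal c2 * indicator (nbhd_above_pos d w r x) y
      + ennreal c3 * indicator (nbhd_above_neg d w r x) y + indicator R y" for y
    using vote_mixture_eq[of y d \<eta> s r w x] nbhd_subset_unit_ball_d[of d r x]
    by (cases "y \<in> U")
      (auto simp: G_def U_def R_def c1_def c2_def c3_def indicator_def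
        nbhd_below_def nbhd_above_pos_def nbhd_above_neg_def)
  then have "(\<integral>\<^sup>+ y. ennreal (G y) * indicator U y \<partial>lborel_d d)
      = ennreal c1 * emeasure (lborel_d d) (nbhd_below d w r x) + ennreal c2 * emeasure (lborel_d d) (nbhd_above_pos d w r x)
        + ennreal c3 * emeasure (lborel_d d) (nbhd_above_neg d w r x) + emeasure (lborel_d d) R"
    using R by (simp add: nn_integral_add nn_integral_cmult_indicator)
  also have "\<dots> = ennreal (c1 * measure (lborel_d d) (nbhd_below d w r x)
      + c2 * measure (lborel_d d) (nbhd_above_pos d w r x)
      + c3 * measure (lborel_d d) (nbhd_above_neg d w r x) + measure (lborel_d d) R)"
    using c R by (simp add: emeasure_subset_unit_ball_d nbhd_parts_subset_unit_ball_d
      ennreal_plus[symmetric] ennreal_mult[symmetric] del: ennreal_plus)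
  finally have integral: "(\<integral>\<^sup>+ y. ennreal (G y) * indicator U y \<partial>lborel_d d) = ennreal (c1 * measure (lborel_d d) (nbhd_below d w r x)
      + c2 * measure (lborel_d d) (nbhd_above_pos d w r x)
      + c3 * measure (lborel_d d) (nbhd_above_neg d w r x) + measure (lborel_d d) R)" .
  have "vote d r w x \<in> borel_measurable (sensor_law d \<eta>)"
    using vote_measurable_sensor_law x unit_ball_d_subset_space by blast
  then have "(\<lambda>p. ennreal (exp (- s * vote d r w x p))) \<in> borel_measurable (sensor_law d \<eta>)"
    by measurable
  from nn_integral_sensor_law[OF this \<eta>]
  have "(\<integral>\<^sup>+ p. ennreal (exp (- s * vote d r w x p)) \<partial>sensor_law d \<eta>)
      = (\<integral>\<^sup>+ y. ennreal (G y) * indicator U y \<partial>lborel_d d) / ennreal (unit_ball_vol (real d))"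
    using \<eta> by (simp add: G_def U_def emeasure_unit_ball_d ennreal_mult' ennreal_plus)
  also have "\<dots> = ennreal ((c1 * measure (lborel_d d) (nbhd_below d w r x)
      + c2 * measure (lborel_d d) (nbhd_above_pos d w r x)
      + c3 * measure (lborel_d d) (nbhd_above_neg d w r x) + measure (lborel_d d) R) / unit_ball_vol (real d))"
    unfolding integral using c by (intro divide_ennreal) auto
  finally show ?thesis by (simp only: R_def U_def c1_def c2_def c3_def)
qed

lemma exp_moment_vote_le:
  assumes w: "(\<Sum>k<d. (w k)^2) = 1" and x: "x \<in> unit_ball_d d" and r: "0 < r" "r \<le> 1/2"
    and \<eta>: "0 < \<eta>" "\<eta> < 1/2"
  shows "(\<integral>\<^sup>+ p. ennreal (exp (- (min \<eta> (1/2 - \<eta>) / 16^d) * vote d r w x p)) \<partial>sensor_law d \<eta>)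
    \<le> ennreal (1 - (min \<eta> (1/2 - \<eta>))^2 * (r/256)^d)"
proof -
  define \<phi> where "\<phi> = min \<eta> (1/2 - \<eta>)"
  define s where "s = \<phi> / 16^d"
  define V where "V = unit_ball_vol (real d)"
  define m0 where "m0 = measure (lborel_d d) (unit_ball_d d - nbhd d r x)"
  define m1 where "m1 = measure (lborel_d d) (nbhd_below d w r x)"
  define m2 where "m2 = measure (lborel_d d) (nbhd_above_pos d w r x)"
  define m3 where "m3 = measure (lborel_d d) (nbhd_above_neg d w r x)"
  have m: "0 \<le> m0" "0 \<le> m1" "0 \<le> m2" "0 \<le> m3" by (auto simp: m0_def m1_def m2_def m3_def)
  have total: "m0 + (m1 + m2 + m3) = V"
    using measure_unit_ball_d_split[of d r x] measure_nbhd_split[of d r x w]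
    by (simp add: m0_def m1_def m2_def m3_def V_def)
  have nbhd_le: "m1 + m2 + m3 \<le> V * r^d"
    using measure_nbhd_le[OF r(1), of d x] measure_nbhd_split[of d r x w]
    by (simp add: m1_def m2_def m3_def V_def)
  have drift: "2 * \<phi> * (V * (r/16)^d) \<le> m1 - (1 - 2*\<eta>) * (m2 - m3)"
    using measure_nbhd_drift[OF w x r \<eta>] by (simp add: m1_def m2_def m3_def V_def \<phi>_def)
  have "m0 + exp (- s) * m1 + (\<eta> * exp (- s) + (1 - \<eta>) * exp s) * m2
      + (\<eta> * exp s + (1 - \<eta>) * exp (- s)) * m3 \<le> V * (1 - \<phi>^2 * (r/256)^d)"
    by (rule exp_mixture_bound[OF m total nbhd_le drift _ _ _ _ s_def]) (use \<eta> in \<open>auto simp: \<phi>_def\<close>)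
  then have "exp (- s) * m1 + (\<eta> * exp (- s) + (1 - \<eta>) * exp s) * m2
      + (\<eta> * exp s + (1 - \<eta>) * exp (- s)) * m3 + m0 \<le> V * (1 - \<phi>^2 * (r/256)^d)" by simp
  then have "(exp (- s) * m1 + (\<eta> * exp (- s) + (1 - \<eta>) * exp s) * m2
      + (\<eta> * exp s + (1 - \<eta>) * exp (- s)) * m3 + m0) / V \<le> 1 - \<phi>^2 * (r/256)^d"
    using unit_ball_vol_pos[of "real d"] by (simp add: V_def divide_le_eq mult.commute)
  then show ?thesis
    using exp_moment_vote_eq[OF x, of \<eta> s r w] \<eta>
    by (simp add: m0_def m1_def m2_def m3_def V_def s_def \<phi>_def ennreal_leI)
qed

section \<open>A Chernoff bound for one sensor\<close>

lemma nn_integral_PiM_prod_pivot: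
  fixes F :: "'a \<Rightarrow> 'a \<Rightarrow> ennreal"
  assumes "sigma_finite_measure M" "finite I" "j \<notin> I"
    and meas: "(\<lambda>\<omega>. \<Prod>i\<in>I. F (\<omega> j) (\<omega> i)) \<in> borel_measurable (PiM (insert j I) (\<lambda>_. M))"
    and F_meas: "\<And>y. y \<in> space M \<Longrightarrow> F y \<in> borel_measurable M"
  shows "(\<integral>\<^sup>+ \<omega>. (\<Prod>i\<in>I. F (\<omega> j) (\<omega> i)) \<partial>PiM (insert j I) (\<lambda>_. M))
    = (\<integral>\<^sup>+ y. (\<integral>\<^sup>+ p. F y p \<partial>M) ^ card I \<partial>M)"
proof -
  interpret product_sigma_finite "\<lambda>_. M"
    using assms(1) by (simp add: product_sigma_finite_def)
  have "(\<integral>\<^sup>+ \<omega>. (\<Prod>i\<in>I. F (\<omega> j) (\<omega> i)) \<partial>PiM (insert j I) (\<lambda>_. M))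
      = (\<integral>\<^sup>+ y. (\<integral>\<^sup>+ x. (\<Prod>i\<in>I. F ((x(j := y)) j) ((x(j := y)) i)) \<partial>PiM I (\<lambda>_. M)) \<partial>M)"
    by (rule product_nn_integral_insert_rev) (use assms meas in auto)
  also have "\<dots> = (\<integral>\<^sup>+ y. (\<integral>\<^sup>+ x. (\<Prod>i\<in>I. F y (x i)) \<partial>PiM I (\<lambda>_. M)) \<partial>M)"
    using assms(3) by (intro nn_integral_cong prod.cong) auto
  also have "\<dots> = (\<integral>\<^sup>+ y. (\<Prod>i\<in>I. \<integral>\<^sup>+ p. F y p \<partial>M) \<partial>M)"
    by (intro nn_integral_cong product_nn_integral_prod) (use assms F_meas in auto)
  finally show ?thesis by simp
qed

lemma emeasure_nonpos_le_exp_moment: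
  assumes f: "f \<in> borel_measurable M" and s: "0 \<le> s"
  shows "emeasure M {\<omega> \<in> space M. f \<omega> \<le> 0} \<le> (\<integral>\<^sup>+ \<omega>. ennreal (exp (- s * f \<omega>)) \<partial>M)"
proof -
  have "indicator {\<omega> \<in> space M. f \<omega> \<le> 0} \<omega> \<le> ennreal (exp (- s * f \<omega>))" for \<omega>
    using s by (auto simp: indicator_def mult_nonneg_nonpos intro: ennreal_leI)
  then have "(\<integral>\<^sup>+ \<omega>. indicator {\<omega> \<in> space M. f \<omega> \<le> 0} \<omega> \<partial>M) \<le> (\<integral>\<^sup>+ \<omega>. ennreal (exp (- s * f \<omega>)) \<partial>M)"
    by (intro nn_integral_mono) auto
  then show ?thesis using f by simp
qed

lemma vote_measurable_sensor_model:
  assumes "i \<in> I" "j \<in> I"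
  shows "(\<lambda>\<omega>. vote d r w (fst (\<omega> j)) (\<omega> i)) \<in> borel_measurable (PiM I (\<lambda>_. sensor_law d \<eta>))"
proof -
  have fst_meas: "(\<lambda>\<omega>. fst (\<omega> k)) \<in> PiM I (\<lambda>_. sensor_law d \<eta>) \<rightarrow>\<^sub>M lborel_d d" if "k \<in> I" for k
  proof -
    have "(\<lambda>\<omega>. fst (\<omega> k)) \<in> PiM I (\<lambda>_. sensor_law d \<eta>) \<rightarrow>\<^sub>M uniform_ball d"
      using that by measurable
    then show ?thesis by (simp add: uniform_ball_def cong: measurable_cong_sets)
  qed
  have "(\<lambda>\<omega>. snd (\<omega> i)) \<in> PiM I (\<lambda>_. sensor_law d \<eta>) \<rightarrow>\<^sub>M measure_pmf (bernoulli_pmf \<eta>)"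
    using assms(1) by measurable
  then have "(\<lambda>\<omega>. snd (\<omega> i)) \<in> PiM I (\<lambda>_. sensor_law d \<eta>) \<rightarrow>\<^sub>M count_space UNIV"
    by (simp cong: measurable_cong_sets)
  from vote_measurable[OF fst_meas[OF assms(2)] fst_meas[OF assms(1)] this] show ?thesis by simp
qed

lemma emeasure_vote_sum_nonpos:
  assumes w: "(\<Sum>k<d. (w k)^2) = 1" and r: "0 < r" "r \<le> 1/2"
    and \<eta>: "0 < \<eta>" "\<eta> < 1/2" and j: "j < N"
  shows "emeasure (sensor_model d N \<eta>)
      {\<omega> \<in> space (sensor_model d N \<eta>). (\<Sum>i\<in>{..<N} - {j}. vote d r w (fst (\<omega> j)) (\<omega> i)) \<le> 0}
    \<le> ennreal ((1 - (min \<eta> (1/2 - \<eta>))^2 * (r/256)^d) ^ (N - 1))"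
proof -
  define q where "q = (min \<eta> (1/2 - \<eta>))^2 * (r/256)^d"
  define s where "s = min \<eta> (1/2 - \<eta>) / 16^d"
  define I where "I = {..<N} - {j}"
  define F where "F y p = ennreal (exp (- s * vote d r w (fst y) p))" for y :: "(nat \<Rightarrow> real) \<times> bool" and p
  have I: "finite I" "j \<notin> I" "insert j I = {..<N}" "card I = N - 1" using j by (auto simp: I_def)
  have s: "0 \<le> s" using \<eta> by (simp add: s_def)
  have q: "q \<le> 1"
    using \<eta> r by (auto simp: q_def min_def power_le_one intro!: mult_le_one)
  interpret sensor_law: prob_space "sensor_law d \<eta>" by (rule prob_space_sensor_law)
  note vote_meas = vote_measurable_sensor_model[where I="{..<N}" and \<eta>=\<eta>]
  have sum_meas: "(\<lambda>\<omega>. \<Sum>i\<in>I. vote d r w (fst (\<omega> j)) (\<omega> i)) \<in> borel_measurable (sensor_model d N \<eta>)"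
    unfolding sensor_model_def by (rule borel_measurable_sum) (use vote_meas j in \<open>auto simp: I_def\<close>)
  have exp_sum: "ennreal (exp (- s * (\<Sum>i\<in>I. vote d r w (fst (\<omega> j)) (\<omega> i)))) = (\<Prod>i\<in>I. F (\<omega> j) (\<omega> i))" for \<omega>
    using I(1) by (simp add: F_def sum_distrib_left exp_sum prod_ennreal)
  have "emeasure (sensor_model d N \<eta>) {\<omega> \<in> space (sensor_model d N \<eta>). (\<Sum>i\<in>I. vote d r w (fst (\<omega> j)) (\<omega> i)) \<le> 0}
      \<le> (\<integral>\<^sup>+ \<omega>. (\<Prod>i\<in>I. F (\<omega> j) (\<omega> i)) \<partial>sensor_model d N \<eta>)"
    using emeasure_nonpos_le_exp_moment[OF sum_meas s] by (simp only: exp_sum)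
  also have "\<dots> = (\<integral>\<^sup>+ y. (\<integral>\<^sup>+ p. F y p \<partial>sensor_law d \<eta>) ^ (N - 1) \<partial>sensor_law d \<eta>)"
    unfolding sensor_model_def I(3)[symmetric] I(4)[symmetric]
  proof (rule nn_integral_PiM_prod_pivot[OF prob_space_imp_sigma_finite[OF prob_space_sensor_law] I(1,2)])
    show "(\<lambda>\<omega>. \<Prod>i\<in>I. F (\<omega> j) (\<omega> i)) \<in> borel_measurable (PiM (insert j I) (\<lambda>_. sensor_law d \<eta>))"
      unfolding F_def I(3) by (intro borel_measurable_prod_ennreal) (use vote_meas j in \<open>auto simp: I_def\<close>)
    show "F y \<in> borel_measurable (sensor_law d \<eta>)" if "y \<in> space (sensor_law d \<eta>)" for y
    proof -
      have [measurable]: "vote d r w (fst y) \<in> borel_measurable (sensor_law d \<eta>)"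
        using vote_measurable_sensor_law[of "fst y" d r w \<eta>] that by (auto simp: space_sensor_law)
      show ?thesis unfolding F_def by measurable
    qed
  qed
  also have "\<dots> \<le> (\<integral>\<^sup>+ y. ennreal (1 - q) ^ (N - 1) \<partial>sensor_law d \<eta>)"
    using AE_sensor_law_unit_ball
  proof (rule nn_integral_mono_AE[OF AE_mp, OF _ AE_I2])
    show "fst y \<in> unit_ball_d d \<longrightarrow> (\<integral>\<^sup>+ p. F y p \<partial>sensor_law d \<eta>) ^ (N - 1) \<le> ennreal (1 - q) ^ (N - 1)" for y
      using exp_moment_vote_le[OF w _ r \<eta>, of "fst y"] by (auto simp: F_def s_def q_def intro: power_mono)
  qed
  also have "\<dots> = ennreal ((1 - q) ^ (N - 1))"
    using q by (simp add: sensor_law.emeasure_space_1 ennreal_power)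
  finally show ?thesis by (simp add: I_def q_def)
qed

section \<open>Consensus by a sweep in order of altitude\<close>

lemma exists_sorting_bij:
  fixes h :: "nat \<Rightarrow> 'a::linorder"
  obtains \<pi> where "bij_betw \<pi> {..<N} {..<N}"
    "\<And>m k. m < N \<Longrightarrow> k < N \<Longrightarrow> h (\<pi> m) < h (\<pi> k) \<Longrightarrow> m < k"
proof
  define xs where "xs = sort_key h [0..<N]"
  have xs: "distinct xs" "set xs = {..<N}" "length xs = N" "sorted (map h xs)"
    by (auto simp: xs_def length_sort)
  show "bij_betw ((!) xs) {..<N} {..<N}"
    by (rule bij_betw_nth) (use xs in auto)
  show "m < k" if "m < N" "k < N" "h (xs ! m) < h (xs ! k)" for m k
  proof (rule ccontr)
    assume "\<not> m < k"
    then have "map h xs ! k \<le> map h xs ! m" using xs that by (intro sorted_nth_mono) auto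
    then show False using that xs(3) by simp
  qed
qed

lemma async_run_prefix:
  assumes "\<And>k. k < n \<Longrightarrow> (\<Sum>i\<in>neighbors d N r x (\<pi> k). if i \<in> \<pi> ` {..<k} then -1 else s0 i) < 0"
  shows "async_run d N r x \<pi> b s0 n = (\<lambda>i. if i \<in> \<pi> ` {..<n} then -1 else s0 i)"
  using assms
proof (induction n)
  case (Suc n)
  have "async_run d N r x \<pi> b s0 n = (\<lambda>i. if i \<in> \<pi> ` {..<n} then -1 else s0 i)"
    using Suc by simp
  moreover have "(\<Sum>i\<in>neighbors d N r x (\<pi> n). if i \<in> \<pi> ` {..<n} then -1 else s0 i) < 0"
    using Suc.prems by simp
  ultimately show ?case
    by (auto simp: br_update_def Let_def lessThan_Suc fun_eq_iff)
qed simp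

lemma vote_le_minus_sweep_state:
  assumes \<pi>: "bij_betw \<pi> {..<N} {..<N}"
    and order: "\<And>m k. m < N \<Longrightarrow> k < N \<Longrightarrow>
      altitude d w (fst (\<omega> (\<pi> m))) < altitude d w (fst (\<omega> (\<pi> k))) \<Longrightarrow> m < k"
    and k: "k < N" and i: "i \<in> neighbors d N r (\<lambda>i. fst (\<omega> i)) (\<pi> k)"
  shows "vote d r w (fst (\<omega> (\<pi> k))) (\<omega> i)
    \<le> - real_of_int (if i \<in> \<pi> ` {..<k} then -1 else init_state d w \<omega> i)"
proof (cases "altitude d w (fst (\<omega> i)) < altitude d w (fst (\<omega> (\<pi> k)))")
  case True
  have "i \<in> \<pi> ` {..<N}" using \<pi> i by (auto simp: neighbors_def bij_betw_def)
  then obtain m where m: "m < N" "\<pi> m = i" by auto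
  then have "i \<in> \<pi> ` {..<k}" using order[OF m(1) k] True by auto
  moreover have "vote d r w (fst (\<omega> (\<pi> k))) (\<omega> i) \<le> 1" by (simp add: vote_def target_def)
  ultimately show ?thesis by simp
next
  case False
  then show ?thesis using i
    by (auto simp: vote_def init_state_def target_def neighbors_def)
qed

lemma consensus_event_if_votes_positive:
  assumes votes: "\<forall>j<N. 0 < (\<Sum>i\<in>{..<N} - {j}. vote d r w (fst (\<omega> j)) (\<omega> i))"
  shows "consensus_event d N r w \<omega>"
proof -
  define x where "x = (\<lambda>i. fst (\<omega> i))"
  define s0 where "s0 = init_state d w \<omega>"
  obtain \<pi> where \<pi>: "bij_betw \<pi> {..<N} {..<N}"
    and order: "\<And>m k. m < N \<Longrightarrow> k < N \<Longrightarrow> altitude d w (x (\<pi> m)) < altitude d w (x (\<pi> k)) \<Longrightarrow> m < k"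
    using exists_sorting_bij[of N "\<lambda>i. altitude d w (x i)"] by blast
  define state where "state k i = (if i \<in> \<pi> ` {..<k} then -1 else s0 i)" for k i
  have "(\<Sum>i\<in>neighbors d N r x (\<pi> k). real_of_int (state k i)) < 0" if k: "k < N" for k
  proof -
    have "\<pi> k < N" using \<pi> k by (auto simp: bij_betw_def)
    then have "0 < (\<Sum>i\<in>{..<N} - {\<pi> k}. vote d r w (x (\<pi> k)) (\<omega> i))" using votes by (simp add: x_def)
    also have "\<dots> = (\<Sum>i\<in>neighbors d N r x (\<pi> k). vote d r w (x (\<pi> k)) (\<omega> i))"
      by (rule sum.mono_neutral_right) (auto simp: neighbors_def vote_def x_def)
    also have "\<dots> \<le> (\<Sum>i\<in>neighbors d N r x (\<pi> k). - real_of_int (state k i))"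
      using vote_le_minus_sweep_state[where \<omega>=\<omega> and d=d and w=w and r=r, OF \<pi> order[unfolded x_def] k]
      unfolding x_def state_def s0_def by (intro sum_mono) blast
    finally show ?thesis by (simp add: sum_negf)
  qed
  then have "async_run d N r x \<pi> b s0 N = state N" for b
    unfolding state_def by (intro async_run_prefix) (simp flip: of_int_sum of_int_0_less_iff)
  moreover have "\<pi> ` {..<N} = {..<N}" using \<pi> by (simp add: bij_betw_def)
  ultimately have "\<forall>i<N. async_run d N r x \<pi> b s0 N i = -1" for b
    by (simp add: state_def)
  then show ?thesis
    using \<pi> unfolding consensus_event_def x_def s0_def by blast
qed

lemma sample_size_bound:
  fixes q \<delta> :: real and N :: nat
  assumes q: "0 < q" "q \<le> 1" and \<delta>: "0 < \<delta>" "\<delta> < 1"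
    and N: "16 / q * (ln (8 / q) + ln (1 / \<delta>)) \<le> real N"
  shows "real N * (1 - q) ^ (N - 1) \<le> \<delta>"
proof -
  define y where "y = q * real N"
  have ln8: "1 \<le> ln (8::real)" using exp_le by (subst ln_ge_iff) auto
  have ln_q: "ln (8 / q) = ln 8 - ln q" "ln q \<le> 0" using q by (simp_all add: ln_div)
  have ln_\<delta>: "ln (1 / \<delta>) = - ln \<delta>" "ln \<delta> < 0" using \<delta> by (simp_all add: ln_div)
  have "0 < ln (8 / q) + ln (1 / \<delta>)" using ln8 ln_q ln_\<delta> by linarith
  then have "0 < 16 / q * (ln (8 / q) + ln (1 / \<delta>))" using q by simp
  then have N_pos: "0 < real N" using N by linarith
  have y: "16 * (ln (8 / q) + ln (1 / \<delta>)) \<le> y"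
    using mult_left_mono[OF N, of q] q by (simp add: y_def)
  have ln_y: "ln y \<le> y / 2"
  proof -
    have "ln (y / 2) \<le> y / 2 - 1" using q N_pos by (intro ln_le_minus_one) (simp add: y_def)
    moreover have "ln y = ln (y / 2) + ln 2" using q N_pos by (simp add: y_def ln_div)
    moreover have "ln (2::real) \<le> 1" using ln_le_minus_one[of 2] by simp
    ultimately show ?thesis by linarith
  qed
  have "(1 - q) ^ (N - 1) \<le> exp (- q) ^ (N - 1)"
    using q by (intro power_mono) (auto simp: exp_ge_add_one_self[of "-q", simplified])
  then have "real N * (1 - q) ^ (N - 1) \<le> real N * exp (- q * real (N - 1))"
    using N_pos by (intro mult_left_mono) (auto simp: exp_of_nat_mult[symmetric] mult.commute)
  also have "\<dots> = exp (ln y - ln q - y + q)"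
    using N_pos q by (simp add: y_def of_nat_diff exp_diff exp_add ln_mult exp_minus field_simps)
  also have "\<dots> \<le> exp (ln \<delta>)"
  proof -
    have "16 * ln 8 - 16 * ln q - 16 * ln \<delta> \<le> y" using y by (simp add: ln_q ln_\<delta> algebra_simps)
    then have "ln y - ln q - y + q \<le> ln \<delta>" using ln_y ln8 ln_q(2) ln_\<delta>(2) q by linarith
    then show ?thesis by simp
  qed
  finally show ?thesis using \<delta> by simp
qed

lemma consensus_probability_bound:
  assumes w: "(\<Sum>i<d. (w i)^2) = 1" and r: "0 < r" "r \<le> 1/2" and \<eta>: "0 < \<eta>" "\<eta> < 1/2"
    and \<delta>: "0 < \<delta>" "\<delta> < 1"
    and q: "q = (1/256 * r)^d * (min \<eta> (1/2 - \<eta>))^2"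
    and N: "16 / q * (ln (8 / q) + ln (1 / \<delta>)) \<le> real N"
  shows "\<exists>A \<in> sets (sensor_model d N \<eta>).
    A \<subseteq> {\<omega> \<in> space (sensor_model d N \<eta>). consensus_event d N r w \<omega>} \<and>
    1 - \<delta> \<le> measure (sensor_model d N \<eta>) A"
proof -
  let ?M = "sensor_model d N \<eta>"
  interpret prob_space ?M
    unfolding sensor_model_def by (rule prob_space_PiM) (rule prob_space_sensor_law)
  define B where "B j = {\<omega> \<in> space ?M. (\<Sum>i\<in>{..<N} - {j}. vote d r w (fst (\<omega> j)) (\<omega> i)) \<le> 0}" for j
  define A where "A = space ?M - (\<Union>j<N. B j)"
  have q': "q = (min \<eta> (1/2 - \<eta>))^2 * (r/256)^d" by (simp add: q mult.commute)
  have q01: "0 < q" "q \<le> 1" using \<eta> r by (auto simp: q' min_def power_le_one intro!: mult_le_one)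
  have B_sets: "B j \<in> sets ?M" if "j < N" for j
  proof -
    have [measurable]: "(\<lambda>\<omega>. \<Sum>i\<in>{..<N} - {j}. vote d r w (fst (\<omega> j)) (\<omega> i)) \<in> borel_measurable ?M"
      unfolding sensor_model_def using that by (intro borel_measurable_sum vote_measurable_sensor_model) auto
    show ?thesis unfolding B_def by measurable
  qed
  have B_le: "measure ?M (B j) \<le> (1 - q) ^ (N - 1)" if "j < N" for j
    using emeasure_vote_sum_nonpos[OF w r \<eta> that] q01 by (simp add: B_def q' emeasure_eq_measure)
  have "measure ?M (\<Union>j<N. B j) \<le> (\<Sum>j<N. measure ?M (B j))"
    by (rule finite_measure_subadditive_finite) (auto intro: B_sets)
  also have "\<dots> \<le> (\<Sum>j<N. (1 - q) ^ (N - 1))" by (rule sum_mono) (rule B_le, simp)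
  also have "\<dots> \<le> \<delta>" using sample_size_bound[OF q01 \<delta> N] by simp
  finally have "1 - \<delta> \<le> measure ?M A"
    unfolding A_def using prob_compl[of "\<Union>j<N. B j"] B_sets by (simp add: sets.countable_UN')
  moreover have "A \<subseteq> {\<omega> \<in> space ?M. consensus_event d N r w \<omega>}"
  proof safe
    fix \<omega> assume "\<omega> \<in> A"
    then show "\<omega> \<in> space ?M" "consensus_event d N r w \<omega>"
      by (auto simp: A_def B_def not_le intro!: consensus_event_if_votes_positive)
  qed
  moreover have "A \<in> sets ?M" using B_sets by (auto simp: A_def)
  ultimately show ?thesis by blast
qed

theorem theorem3:
  shows "\<exists>c::real. c > 0 \<and>
    (\<forall>(d::nat) (N::nat) (r::real) (\<eta>::real) (\<delta>::real) (w::nat \<Rightarrow> real).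
      d \<ge> 1 \<longrightarrow> 0 < r \<longrightarrow> r \<le> 1/2 \<longrightarrow> 0 < \<eta> \<longrightarrow> \<eta> < 1/2 \<longrightarrow>
      0 < \<delta> \<longrightarrow> \<delta> < 1 \<longrightarrow> (\<Sum>i<d. (w i)^2) = 1 \<longrightarrow>
      (let \<phi> = min \<eta> (1/2 - \<eta>) in
        real N \<ge> 16 / ((c*r)^d * \<phi>^2) * (ln (8 / ((c*r)^d * \<phi>^2)) + ln (1/\<delta>))) \<longrightarrow>
      (\<exists>A \<in> sets (sensor_model d N \<eta>).
         A \<subseteq> {\<omega> \<in> space (sensor_model d N \<eta>). consensus_event d N r w \<omega>} \<and>
         measure (sensor_model d N \<eta>) A \<ge> 1 - \<delta>))"
proof (intro exI[of _ "1/256"] conjI allI impI)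
  fix d N r \<eta> \<delta> and w :: "nat \<Rightarrow> real"
  assume "0 < r" "r \<le> 1/2" "0 < \<eta>" "\<eta> < 1/2" "0 < \<delta>" "\<delta> < 1" "(\<Sum>i<d. (w i)^2) = 1"
    and N: "let \<phi> = min \<eta> (1/2 - \<eta>) in
      real N \<ge> 16 / ((1/256*r)^d * \<phi>^2) * (ln (8 / ((1/256*r)^d * \<phi>^2)) + ln (1/\<delta>))"
  then show "\<exists>A \<in> sets (sensor_model d N \<eta>).
      A \<subseteq> {\<omega> \<in> space (sensor_model d N \<eta>). consensus_event d N r w \<omega>} \<and>
      measure (sensor_model d N \<eta>) A \<ge> 1 - \<delta>"
    unfolding Let_def by (intro consensus_probability_bound[OF _ _ _ _ _ _ _ refl]) simp_all
qed simp

end
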